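(* Let $w\in\mathcal S_n$ and $a\in\mathrm R(w)$. Then $d([a_{\min}],[a])=t(a_{\min},a)=|\mathrm{sup}(a)|$ and $d([a],[a_{\max}])=t(a,a_{\max})=|\mathrm T_w|-|\mathrm{sup}(a)|$. In particular $d([a_{\min}],[a_{\max}])=|\mathrm T_w|$.
   Context: Permutations are in one-line notation; $\mathrm{Des}(u)=\{i:u_i>u_{i+1}\}$. A word $a=a_1\cdots a_\ell$ with letters in $\{1,\dots,n-1\}$ acts on a word of length $n$ by successively swapping the entries in positions $a_j$ and $a_j+1$. $\mathrm R(w)$: reduced words of $w$ (length $\ell(w)$ = number of inversions, action on $12\cdots n$ yields $w$). Commutation: replace a factor $ij$, $|i-j|\ge2$, by $ji$; long braid relation: replace $i(i+1)i$ by $(i+1)i(i+1)$ or vice versa; $[a]$ is the commutation class of $a$. $C(w)$: vertices are commutation classes, $[a]\ne[b]$ adjacent if some $a'\in[a]$, $b'\in[b]$ differ by one long braid relation; $d$ is its graph distance. $a_{\min}$ (resp. $a_{\max}$): set $w^0=w$, for $j=0,\dots,\ell(w)-1$ let $i_j$ be the smallest (resp. largest) element of $\mathrm{Des}(w^j)$ and obtain $w^{j+1}$ by swapping entries in positions $i_j,i_j+1$; the word is $i_{\ell(w)-1}\cdots i_0$. For an inversion $(p,q)$ of $w$, $P_a(p,q)$ is the index of the step of $a$ swapping $p$ and $q$. $\mathrm T_w$: triples $(x,y,z)$, $x<y<z$, with $z,y,x$ in this order in $w$. $\Gamma(a,(x,y,z))=1$ if $P_a(y,x)>P_a(z,y)$,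 else $0$. $t(a,b)$ is the number of triples $\tau\in\mathrm T_w$ with $\Gamma(a,\tau)\ne\Gamma(b,\tau)$. $\mathrm{sup}(a)=\{\tau\in\mathrm T_w:\Gamma(a,\tau)=1\}$. *)

theory Defs
  imports Main
begin

text \<open>Permutations of {1..n} in one-line notation are lists; positions are 1-indexed
  in the mathematics, list indices are 0-based.\<close>

definition is_perm :: "nat \<Rightarrow> nat list \<Rightarrow> bool" where
  "is_perm n w \<longleftrightarrow> length w = n \<and> set w = {1..n}"

definition id_word :: "nat \<Rightarrow> nat list" where
  "id_word n = [1..<n+1]"

definition swap_at :: "nat \<Rightarrow> nat list \<Rightarrow> nat list" where
  "swap_at i u = u[i - 1 := u ! i, i := u ! (i - 1)]"

definition act :: "nat list \<Rightarrow> nat list \<Rightarrow> nat list" where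
  "act a u = fold swap_at a u"

definition ninv :: "nat list \<Rightarrow> nat" where
  "ninv w = card {(i, j). i < j \<and> j < length w \<and> w ! i > w ! j}"

definition Des :: "nat list \<Rightarrow> nat set" where
  "Des u = {i. 1 \<le> i \<and> i < length u \<and> u ! (i - 1) > u ! i}"

definition reduced_words :: "nat \<Rightarrow> nat list \<Rightarrow> nat list set" where
  "reduced_words n w = {a. set a \<subseteq> {1..n - 1} \<and> length a = ninv w \<and> act a (id_word n) = w}"

inductive comm_step :: "nat list \<Rightarrow> nat list \<Rightarrow> bool" where
  "(i \<ge> j + 2 \<or> j \<ge> i + 2) \<Longrightarrow> comm_step (xs @ [i, j] @ ys) (xs @ [j, i] @ ys)"

definition comm_class :: "nat list \<Rightarrow> nat list set" where
  "comm_class a = {b. comm_step\<^sup>*\<^sup>* a b}"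

inductive braid_step :: "nat list \<Rightarrow> nat list \<Rightarrow> bool" where
  "braid_step (xs @ [i, i + 1, i] @ ys) (xs @ [i + 1, i, i + 1] @ ys)"
| "braid_step (xs @ [i + 1, i, i + 1] @ ys) (xs @ [i, i + 1, i] @ ys)"

definition C_vertices :: "nat \<Rightarrow> nat list \<Rightarrow> nat list set set" where
  "C_vertices n w = comm_class ` reduced_words n w"

definition C_adj :: "nat \<Rightarrow> nat list \<Rightarrow> nat list set \<Rightarrow> nat list set \<Rightarrow> bool" where
  "C_adj n w A B \<longleftrightarrow> A \<in> C_vertices n w \<and> B \<in> C_vertices n w \<and> A \<noteq> B \<and>
     (\<exists>a\<in>A. \<exists>b\<in>B. braid_step a b)"

definition C_dist :: "nat \<Rightarrow> nat list \<Rightarrow> nat list set \<Rightarrow> nat list set \<Rightarrow> nat" where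
  "C_dist n w A B = (LEAST k. (C_adj n w ^^ k) A B)"

text \<open>a_min / a_max: the greedy words; step produces [i_{l-1},...,i_0].\<close>
fun greedy_aux :: "(nat set \<Rightarrow> nat) \<Rightarrow> nat \<Rightarrow> nat list \<Rightarrow> nat list" where
  "greedy_aux sel 0 u = []"
| "greedy_aux sel (Suc k) u = (let i = sel (Des u) in greedy_aux sel k (swap_at i u) @ [i])"

definition a_min :: "nat list \<Rightarrow> nat list" where
  "a_min w = greedy_aux Min (ninv w) w"

definition a_max :: "nat list \<Rightarrow> nat list" where
  "a_max w = greedy_aux Max (ninv w) w"

text \<open>P_a(p,q): the (1-based) index of the step of a (acting on 12...n) that swaps p and q.\<close>
definition P_step :: "nat \<Rightarrow> nat list \<Rightarrow> nat \<Rightarrow> nat \<Rightarrow> nat" where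
  "P_step n a p q = (LEAST j. 1 \<le> j \<and> j \<le> length a \<and>
     (let u = act (take (j - 1) a) (id_word n); k = a ! (j - 1)
      in {u ! (k - 1), u ! k} = {p, q}))"

definition triples :: "nat list \<Rightarrow> (nat \<times> nat \<times> nat) set" where
  "triples w = {(x, y, z). x < y \<and> y < z \<and>
     (\<exists>i j k. i < j \<and> j < k \<and> k < length w \<and> w ! i = z \<and> w ! j = y \<and> w ! k = x)}"

definition Gamma :: "nat \<Rightarrow> nat list \<Rightarrow> nat \<times> nat \<times> nat \<Rightarrow> nat" where
  "Gamma n a \<tau> = (case \<tau> of (x, y, z) \<Rightarrow> if P_step n a y x > P_step n a z y then 1 else 0)"

definition t_dist :: "nat \<Rightarrow> nat list \<Rightarrow> nat list \<Rightarrow> nat list \<Rightarrow> nat" where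
  "t_dist n w a b = card {\<tau> \<in> triples w. Gamma n a \<tau> \<noteq> Gamma n b \<tau>}"

definition supp :: "nat \<Rightarrow> nat list \<Rightarrow> nat list \<Rightarrow> (nat \<times> nat \<times> nat) set" where
  "supp n w a = {\<tau> \<in> triples w. Gamma n a \<tau> = 1}"

end

theory Submission
  imports Defs
begin

text \<open>
  A reduced word \<open>a\<close> of \<open>w\<close> creates every inversion of \<open>w\<close> exactly once, and \<open>\<Gamma>(a, (x, y, z))\<close>
  records whether \<open>{y, z}\<close> is created before \<open>{x, y}\<close>. A commutation exchanges two consecutive
  disjoint inversions and so preserves \<open>\<Gamma>\<close>; a long braid move \<open>i (i+1) i \<rightarrow> (i+1) i (i+1)\<close>
  reverses the creation order of the three inversions of a single triple and flips \<open>\<Gamma>\<close> there from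
  0 to 1. Hence every edge of \<open>C(w)\<close> changes \<open>\<Gamma>\<close> on at most one triple and \<open>t\<close> bounds \<open>d\<close> from
  below. Conversely \<open>\<Gamma>(a_min) \<equiv> 0\<close> and \<open>\<Gamma>(a_max) \<equiv> 1\<close>, and an induction on \<open>\<ell>(w)\<close> comparing
  the last letter of \<open>a\<close> with the smallest (largest) descent of \<open>w\<close> shows that \<open>a_min\<close> reaches
  every \<open>a\<close>, and every \<open>a\<close> reaches \<open>a_max\<close>, by commutations and such upward braid moves. Along
  these paths each braid move adds one triple to \<open>sup\<close>, which gives paths of length \<open>t\<close>.
\<close>

section \<open>Adjacent transpositions\<close>

lemma length_swap_at [simp]: "length (swap_at i u) = length u"
  by (simp add: swap_at_def)

lemma nth_swap_at:
  "1 \<le> i \<Longrightarrow> i < length u \<Longrightarrow> k < length u \<Longrightarrow>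
   swap_at i u ! k = (if k = i - 1 then u ! i else if k = i then u ! (i - 1) else u ! k)"
  by (auto simp: swap_at_def nth_list_update)

lemma set_swap_at [simp]: "1 \<le> i \<Longrightarrow> i < length u \<Longrightarrow> set (swap_at i u) = set u"
  unfolding swap_at_def by (rule set_swap) auto

lemma distinct_swap_at [simp]: "1 \<le> i \<Longrightarrow> i < length u \<Longrightarrow> distinct (swap_at i u) = distinct u"
  unfolding swap_at_def by (rule distinct_swap) auto

lemma swap_at_swap_at: "1 \<le> i \<Longrightarrow> i < length u \<Longrightarrow> swap_at i (swap_at i u) = u"
  by (rule nth_equalityI) (auto simp: nth_swap_at)

lemma swap_at_commute:
  "1 \<le> i \<Longrightarrow> i < length u \<Longrightarrow> 1 \<le> j \<Longrightarrow> j < length u \<Longrightarrow> i \<ge> j + 2 \<or> j \<ge> i + 2 \<Longrightarrow>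
   swap_at i (swap_at j u) = swap_at j (swap_at i u)"
  by (rule nth_equalityI) (auto simp: nth_swap_at)

lemma swap_at_braid:
  "1 \<le> i \<Longrightarrow> i + 1 < length u \<Longrightarrow>
   swap_at i (swap_at (i + 1) (swap_at i u)) = swap_at (i + 1) (swap_at i (swap_at (i + 1) u))"
  by (rule nth_equalityI) (auto simp: nth_swap_at)

lemma act_Nil [simp]: "act [] u = u"
  by (simp add: act_def)

lemma act_Cons [simp]: "act (k # a) u = act a (swap_at k u)"
  by (simp add: act_def)

lemma act_append [simp]: "act (a @ b) u = act b (act a u)"
  by (simp add: act_def)

lemma length_act [simp]: "length (act a u) = length u"
  by (induction a arbitrary: u) auto

lemma set_act: "set a \<subseteq> {1..length u - 1} \<Longrightarrow> set (act a u) = set u"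
  by (induction a arbitrary: u) auto

lemma length_id_word [simp]: "length (id_word n) = n"
  and set_id_word: "set (id_word n) = {1..n}"
  and distinct_id_word: "distinct (id_word n)"
  and sorted_id_word: "sorted (id_word n)"
  by (auto simp: id_word_def simp del: upt_Suc)

lemma is_perm_distinct: "is_perm n w \<Longrightarrow> distinct w"
  unfolding is_perm_def by (metis card_atLeastAtMost card_distinct diff_Suc_1)

lemma is_perm_act_id_word: "set a \<subseteq> {1..n - 1} \<Longrightarrow> is_perm n (act a (id_word n))"
  using set_act[of a "id_word n"] by (simp add: is_perm_def set_id_word)

lemma is_perm_swap_at: "is_perm n w \<Longrightarrow> i \<in> Des w \<Longrightarrow> is_perm n (swap_at i w)"
  by (simp add: is_perm_def Des_def)

lemma mem_Des_iff: "i \<in> Des u \<longleftrightarrow> 1 \<le> i \<and> i < length u \<and> u ! i < u ! (i - 1)"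
  by (simp add: Des_def)

lemma finite_Des [simp]: "finite (Des u)"
  unfolding Des_def by (rule finite_subset[of _ "{..<length u}"]) auto

lemma nth_less_if_no_Des:
  assumes "distinct w" and "i < j" "j < length w" and "\<forall>e. i < e \<and> e \<le> j \<longrightarrow> e \<notin> Des w"
  shows "w ! i < w ! j"
  using assms(2-4)
proof (induction j)
  case (Suc j)
  have "w ! j \<noteq> w ! Suc j"
    using assms(1) Suc.prems nth_eq_iff_index_eq by fastforce
  moreover have "\<not> w ! Suc j < w ! j"
    using Suc.prems(3)[rule_format, of "Suc j"] Suc.prems(1,2) by (simp add: mem_Des_iff)
  ultimately show ?case
    using Suc by (cases "i = j") auto
qed simp

section \<open>Inversions\<close>

definition inversion_pairs :: "nat list \<Rightarrow> nat set set" where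
  "inversion_pairs u =
     (\<lambda>(i, j). {u ! i, u ! j}) ` {(i, j). i < j \<and> j < length u \<and> u ! i > u ! j}"

lemma mem_inversion_pairs:
  "S \<in> inversion_pairs u \<longleftrightarrow> (\<exists>i j. i < j \<and> j < length u \<and> u ! j < u ! i \<and> S = {u ! i, u ! j})"
  unfolding inversion_pairs_def by blast

lemma finite_inversion_pairs [simp]: "finite (inversion_pairs u)"
proof -
  have "{(i, j). i < j \<and> j < length u \<and> u ! i > u ! j} \<subseteq> {..<length u} \<times> {..<length u}"
    by auto
  then show ?thesis
    unfolding inversion_pairs_def by (meson finite_SigmaI finite_imageI finite_lessThan finite_subset)
qed

lemma doubleton_nth_eq_iff:
  assumes "distinct u" "i < j" "j < length u" "i' < j'" "j' < length u"
  shows "{u ! i, u ! j} = {u ! i', u ! j'} \<longleftrightarrow> i = i' \<and> j = j'"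
proof
  assume "{u ! i, u ! j} = {u ! i', u ! j'}"
  then have "u ! i = u ! i' \<and> u ! j = u ! j' \<or> u ! i = u ! j' \<and> u ! j = u ! i'"
    unfolding doubleton_eq_iff .
  then have "i = i' \<and> j = j' \<or> i = j' \<and> j = i'"
    using assms by (simp add: nth_eq_iff_index_eq)
  then show "i = i' \<and> j = j'"
    using assms by linarith
qed simp

lemma card_inversion_pairs:
  assumes "distinct u"
  shows "card (inversion_pairs u) = ninv u"
proof -
  have "inj_on (\<lambda>(i, j). {u ! i, u ! j}) {(i, j). i < j \<and> j < length u \<and> u ! i > u ! j}"
    by (rule inj_onI, clarify) (simp add: doubleton_nth_eq_iff[OF assms])
  then show ?thesis
    unfolding inversion_pairs_def ninv_def by (rule card_image)
qed

lemma mem_inversion_pairs_iff: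
  assumes "distinct u" "i < j" "j < length u"
  shows "{u ! i, u ! j} \<in> inversion_pairs u \<longleftrightarrow> u ! j < u ! i"
proof
  assume "{u ! i, u ! j} \<in> inversion_pairs u"
  then obtain i' j' where "i' < j'" "j' < length u" "u ! j' < u ! i'"
    and "{u ! i, u ! j} = {u ! i', u ! j'}"
    unfolding mem_inversion_pairs by blast
  then show "u ! j < u ! i"
    using doubleton_nth_eq_iff[OF assms] by blast
next
  assume "u ! j < u ! i"
  then show "{u ! i, u ! j} \<in> inversion_pairs u"
    using assms(2,3) unfolding mem_inversion_pairs by blast
qed

lemma inversion_pairs_swap_at_subset:
  assumes "1 \<le> k" "k < length u"
  shows "inversion_pairs (swap_at k u) \<subseteq> insert {u ! (k - 1), u ! k} (inversion_pairs u)"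
proof
  define \<sigma> where "\<sigma> t = (if t = k - 1 then k else if t = k then k - 1 else t)" for t
  have nth_\<sigma>: "swap_at k u ! t = u ! \<sigma> t" if "t < length u" for t
    using assms that by (simp add: \<sigma>_def nth_swap_at)
  fix S assume "S \<in> inversion_pairs (swap_at k u)"
  then obtain i j where ij: "i < j" "j < length u" "u ! \<sigma> j < u ! \<sigma> i"
    and S: "S = {u ! \<sigma> i, u ! \<sigma> j}"
    unfolding mem_inversion_pairs using nth_\<sigma> by auto
  show "S \<in> insert {u ! (k - 1), u ! k} (inversion_pairs u)"
  proof (cases "i = k - 1 \<and> j = k")
    case True
    then show ?thesis
      using S assms by (auto simp: \<sigma>_def)
  next
    case False
    \<comment> \<open>an adjacent transposition preserves the relative order of every other pair of positions\<close>
    then have "\<sigma> i < \<sigma> j" "\<sigma> j < length u"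
      using ij assms by (auto simp: \<sigma>_def)
    then have "S \<in> inversion_pairs u"
      using ij S unfolding mem_inversion_pairs by blast
    then show ?thesis
      by simp
  qed
qed

lemma inversion_pairs_swap_at_Des:
  assumes "distinct w" "m \<in> Des w"
  shows "{w ! (m - 1), w ! m} \<in> inversion_pairs w"
    and "inversion_pairs (swap_at m w) = inversion_pairs w - {{w ! (m - 1), w ! m}}"
proof -
  have m: "1 \<le> m" "m < length w" "w ! m < w ! (m - 1)"
    using assms(2) by (auto simp: mem_Des_iff)
  let ?P = "{w ! (m - 1), w ! m}"
  let ?v = "swap_at m w"
  show P: "?P \<in> inversion_pairs w"
    using mem_inversion_pairs_iff[OF assms(1), of "m - 1" m] m by simp
  have v: "?v ! (m - 1) = w ! m" "?v ! m = w ! (m - 1)"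
    using m by (auto simp: nth_swap_at)
  have "?P \<notin> inversion_pairs ?v"
    using mem_inversion_pairs_iff[of ?v "m - 1" m] assms(1) m v by (simp add: insert_commute)
  moreover have "inversion_pairs w \<subseteq> insert ?P (inversion_pairs ?v)"
    using inversion_pairs_swap_at_subset[of m ?v] m v by (simp add: swap_at_swap_at insert_commute)
  ultimately show "inversion_pairs ?v = inversion_pairs w - {?P}"
    using inversion_pairs_swap_at_subset[of m w] m by auto
qed

lemma ninv_swap_at_Des:
  assumes "distinct w" "m \<in> Des w"
  shows "ninv (swap_at m w) = ninv w - 1" and "0 < ninv w"
proof -
  have m: "1 \<le> m" "m < length w"
    using assms(2) by (auto simp: mem_Des_iff)
  show "ninv (swap_at m w) = ninv w - 1"
    using inversion_pairs_swap_at_Des[OF assms] card_inversion_pairs assms(1) m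
    by (metis card_Diff_singleton distinct_swap_at finite_inversion_pairs)
  show "0 < ninv w"
    using inversion_pairs_swap_at_Des(1)[OF assms] card_inversion_pairs[OF assms(1)]
    by (metis card_gt_0_iff empty_iff finite_inversion_pairs)
qed

lemma Des_eq_empty_imp_sorted:
  assumes "distinct w" "Des w = {}"
  shows "sorted w"
  unfolding sorted_iff_nth_mono_less
  using nth_less_if_no_Des[OF assms(1)] assms(2) by (metis empty_iff less_imp_le)

lemma Des_nonempty_if_ninv_pos:
  assumes "distinct w" "0 < ninv w"
  shows "Des w \<noteq> {}"
proof
  assume "Des w = {}"
  then have "sorted w"
    by (rule Des_eq_empty_imp_sorted[OF assms(1)])
  have "{(i, j). i < j \<and> j < length w \<and> w ! i > w ! j} \<noteq> {}"
    using assms(2) unfolding ninv_def by (metis card.empty less_irrefl)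
  then obtain i j where "i < j" "j < length w" "w ! j < w ! i"
    by blast
  with \<open>sorted w\<close> show False
    using sorted_nth_mono[of w i j] by simp
qed

lemma ninv_eq_0_imp_id_word:
  assumes "is_perm n w" "ninv w = 0"
  shows "w = id_word n"
proof -
  have "distinct w"
    using assms(1) by (rule is_perm_distinct)
  moreover have "Des w = {}"
    using ninv_swap_at_Des(2)[OF \<open>distinct w\<close>] assms(2) by auto
  ultimately have "sorted w"
    by (rule Des_eq_empty_imp_sorted)
  then show ?thesis
    using sorted_distinct_set_unique[of w "id_word n"] \<open>distinct w\<close> assms(1)
    by (simp add: is_perm_def set_id_word distinct_id_word sorted_id_word)
qed

section \<open>The pairs of values exchanged by a word\<close>

fun swapped_pairs :: "nat list \<Rightarrow> nat list \<Rightarrow> nat set list" where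
  "swapped_pairs [] u = []"
| "swapped_pairs (k # a) u = {u ! (k - 1), u ! k} # swapped_pairs a (swap_at k u)"

lemma length_swapped_pairs [simp]: "length (swapped_pairs a u) = length a"
  by (induction a arbitrary: u) auto

lemma swapped_pairs_append [simp]:
  "swapped_pairs (a @ b) u = swapped_pairs a u @ swapped_pairs b (act a u)"
  by (induction a arbitrary: u) auto

lemma nth_swapped_pairs:
  "j < length a \<Longrightarrow>
   swapped_pairs a u ! j = {act (take j a) u ! (a ! j - 1), act (take j a) u ! (a ! j)}"
proof (induction a arbitrary: u j)
  case (Cons k a)
  then show ?case
    by (cases j) auto
qed simp

lemma inversion_pairs_act_subset:
  "set a \<subseteq> {1..length u - 1} \<Longrightarrow>
   inversion_pairs (act a u) \<subseteq> inversion_pairs u \<union> set (swapped_pairs a u)"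
proof (induction a arbitrary: u)
  case (Cons k a)
  then have "inversion_pairs (act a (swap_at k u))
      \<subseteq> inversion_pairs (swap_at k u) \<union> set (swapped_pairs a (swap_at k u))"
    by simp
  moreover have "inversion_pairs (swap_at k u) \<subseteq> insert {u ! (k - 1), u ! k} (inversion_pairs u)"
    using Cons.prems by (intro inversion_pairs_swap_at_subset) auto
  ultimately show ?case
    by auto
qed simp

lemma inversion_pairs_id_word [simp]: "inversion_pairs (id_word n) = {}"
proof -
  have "\<not> id_word n ! j < id_word n ! i" if "i < j" "j < n" for i j
    using sorted_nth_mono[OF sorted_id_word, of i j n] that by simp
  then show ?thesis
    by (auto simp: mem_inversion_pairs)
qed

lemma reduced_words_is_perm: "a \<in> reduced_words n w \<Longrightarrow> is_perm n w"
  unfolding reduced_words_def using is_perm_act_id_word by blast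

text \<open>The \<open>\<ell>(w)\<close> pairs swapped by a reduced word cover the inversions of \<open>w\<close>, so by counting
  they are distinct and exhaust them: the list orders the inversions by the step creating them,
  which is what \<open>P_step\<close> reads off.\<close>

lemma reduced_words_swapped_pairs:
  assumes "a \<in> reduced_words n w"
  shows "distinct (swapped_pairs a (id_word n))"
    and "set (swapped_pairs a (id_word n)) = inversion_pairs w"
proof -
  let ?L = "swapped_pairs a (id_word n)"
  have a: "set a \<subseteq> {1..n - 1}" "length a = ninv w" "act a (id_word n) = w"
    using assms by (auto simp: reduced_words_def)
  have sub: "inversion_pairs w \<subseteq> set ?L"
    using inversion_pairs_act_subset[of a "id_word n"] a by simp
  have "length ?L = card (inversion_pairs w)"
    using a card_inversion_pairs[OF is_perm_distinct[OF reduced_words_is_perm[OF assms]]] by simp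
  also have "\<dots> \<le> card (set ?L)"
    using sub by (simp add: card_mono)
  finally have "card (set ?L) = length ?L"
    using card_length[of ?L] by linarith
  then show "distinct ?L"
    by (simp add: card_distinct)
  show "set ?L = inversion_pairs w"
    using sub \<open>card (set ?L) = length ?L\<close> \<open>length ?L = card (inversion_pairs w)\<close>
    by (metis card_subset_eq finite_set)
qed

lemma reduced_words_snoc_iff:
  assumes "is_perm n w"
  shows "b @ [j] \<in> reduced_words n w \<longleftrightarrow> j \<in> Des w \<and> b \<in> reduced_words n (swap_at j w)"
proof
  assume bj: "b @ [j] \<in> reduced_words n w"
  let ?v = "act b (id_word n)"
  have b: "set b \<subseteq> {1..n - 1}" and j: "1 \<le> j" "j < n" and w: "w = swap_at j ?v"
    using bj by (auto simp: reduced_words_def)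
  have dv: "distinct ?v"
    using is_perm_distinct[OF is_perm_act_id_word[OF b]] .
  have "{?v ! (j - 1), ?v ! j} \<notin> set (swapped_pairs b (id_word n))"
    using reduced_words_swapped_pairs(1)[OF bj] by simp
  then have "{?v ! (j - 1), ?v ! j} \<notin> inversion_pairs ?v"
    using inversion_pairs_act_subset[of b "id_word n"] b by auto
  moreover have "?v ! (j - 1) \<noteq> ?v ! j"
    using nth_eq_iff_index_eq[OF dv, of "j - 1" j] j by simp
  ultimately have "?v ! (j - 1) < ?v ! j"
    using mem_inversion_pairs_iff[OF dv, of "j - 1" j] j by auto
  then have jD: "j \<in> Des w"
    using j w by (simp add: mem_Des_iff nth_swap_at)
  have "?v = swap_at j w"
    using w j by (simp add: swap_at_swap_at)
  moreover have "length b = ninv (swap_at j w)"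
    using bj ninv_swap_at_Des(1)[OF is_perm_distinct[OF assms] jD] by (auto simp: reduced_words_def)
  ultimately show "j \<in> Des w \<and> b \<in> reduced_words n (swap_at j w)"
    using jD b by (simp add: reduced_words_def)
next
  assume "j \<in> Des w \<and> b \<in> reduced_words n (swap_at j w)"
  then have jD: "j \<in> Des w" and b: "b \<in> reduced_words n (swap_at j w)"
    by auto
  have "length w = n" "1 \<le> j" "j < length w"
    using assms jD by (auto simp: is_perm_def mem_Des_iff)
  moreover have "0 < ninv w" "ninv (swap_at j w) = ninv w - 1"
    using ninv_swap_at_Des[OF is_perm_distinct[OF assms] jD] by auto
  ultimately show "b @ [j] \<in> reduced_words n w"
    using b by (auto simp: reduced_words_def swap_at_swap_at)
qed

lemma reduced_words_prefix:
  "a @ c \<in> reduced_words n w \<Longrightarrow> a \<in> reduced_words n (act a (id_word n))"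
proof (induction c arbitrary: w rule: rev_induct)
  case Nil
  then show ?case
    by (simp add: reduced_words_def)
next
  case (snoc k c)
  have "(a @ c) @ [k] \<in> reduced_words n w"
    using snoc.prems by simp
  then have "a @ c \<in> reduced_words n (swap_at k w)"
    using reduced_words_snoc_iff[OF reduced_words_is_perm[OF snoc.prems]] by blast
  then show ?case
    by (rule snoc.IH)
qed

lemma reduced_words_ascent:
  assumes "xs @ k # ys \<in> reduced_words n w"
  shows "act xs (id_word n) ! (k - 1) < act xs (id_word n) ! k"
proof -
  let ?v = "act xs (id_word n)"
  have "xs @ [k] \<in> reduced_words n (swap_at k ?v)"
    using reduced_words_prefix[of "xs @ [k]" ys n w] assms by simp
  then have "k \<in> Des (swap_at k ?v)"
    using reduced_words_snoc_iff reduced_words_is_perm by blast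
  then show ?thesis
    by (auto simp: mem_Des_iff nth_swap_at split: if_splits)
qed

section \<open>The greedy words\<close>

lemma greedy_aux_reduced:
  assumes sel: "\<And>D. finite D \<Longrightarrow> D \<noteq> {} \<Longrightarrow> sel D \<in> D" and "is_perm n w"
  shows "greedy_aux sel (ninv w) w \<in> reduced_words n w"
  using assms(2)
proof (induction "ninv w" arbitrary: w)
  case 0
  then show ?case
    using ninv_eq_0_imp_id_word[of n w] by (simp add: reduced_words_def)
next
  case (Suc k)
  let ?m = "sel (Des w)"
  have m: "?m \<in> Des w"
    using sel Des_nonempty_if_ninv_pos[OF is_perm_distinct[OF Suc.prems]] Suc.hyps(2) by simp
  have "ninv (swap_at ?m w) = k"
    using ninv_swap_at_Des(1)[OF is_perm_distinct[OF Suc.prems] m] Suc.hyps(2) by simp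
  then have "greedy_aux sel k (swap_at ?m w) \<in> reduced_words n (swap_at ?m w)"
    using Suc.hyps(1) is_perm_swap_at[OF Suc.prems m] by metis
  then show ?case
    using reduced_words_snoc_iff[OF Suc.prems] m Suc.hyps(2)[symmetric] by (simp add: Let_def)
qed

lemma greedy_aux_snoc:
  assumes "is_perm n w" "sel (Des w) \<in> Des w"
  shows "greedy_aux sel (ninv w) w
    = greedy_aux sel (ninv (swap_at (sel (Des w)) w)) (swap_at (sel (Des w)) w) @ [sel (Des w)]"
proof -
  obtain k where k: "ninv w = Suc k"
    using ninv_swap_at_Des(2)[OF is_perm_distinct[OF assms(1)] assms(2)] not0_implies_Suc by blast
  then have "ninv (swap_at (sel (Des w)) w) = k"
    using ninv_swap_at_Des(1)[OF is_perm_distinct[OF assms(1)] assms(2)] by simp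
  then show ?thesis
    using k by (simp add: Let_def)
qed

lemma a_min_reduced: "is_perm n w \<Longrightarrow> a_min w \<in> reduced_words n w"
  unfolding a_min_def by (rule greedy_aux_reduced) auto

lemma a_max_reduced: "is_perm n w \<Longrightarrow> a_max w \<in> reduced_words n w"
  unfolding a_max_def by (rule greedy_aux_reduced) auto

lemma Min_Des_mem: "is_perm n w \<Longrightarrow> 0 < ninv w \<Longrightarrow> Min (Des w) \<in> Des w"
  and Max_Des_mem: "is_perm n w \<Longrightarrow> 0 < ninv w \<Longrightarrow> Max (Des w) \<in> Des w"
  using Des_nonempty_if_ninv_pos[OF is_perm_distinct] by auto

lemma a_min_snoc:
  "is_perm n w \<Longrightarrow> 0 < ninv w \<Longrightarrow>
   a_min w = a_min (swap_at (Min (Des w)) w) @ [Min (Des w)]"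
  unfolding a_min_def using greedy_aux_snoc Min_Des_mem by blast

lemma a_max_snoc:
  "is_perm n w \<Longrightarrow> 0 < ninv w \<Longrightarrow>
   a_max w = a_max (swap_at (Max (Des w)) w) @ [Max (Des w)]"
  unfolding a_max_def using greedy_aux_snoc Max_Des_mem by blast

section \<open>Relative order of inversions in a reduced word\<close>

lemma P_step_eq:
  assumes "distinct (swapped_pairs a (id_word n))" "i < length a"
    "swapped_pairs a (id_word n) ! i = {p, q}"
  shows "P_step n a p q = Suc i"
  unfolding P_step_def
proof (rule Least_equality)
  show "1 \<le> Suc i \<and> Suc i \<le> length a \<and> (let u = act (take (Suc i - 1) a) (id_word n);
      k = a ! (Suc i - 1) in {u ! (k - 1), u ! k} = {p, q})"
    using assms nth_swapped_pairs[OF assms(2)] by (simp add: Let_def)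
next
  fix j
  assume j: "1 \<le> j \<and> j \<le> length a \<and> (let u = act (take (j - 1) a) (id_word n);
      k = a ! (j - 1) in {u ! (k - 1), u ! k} = {p, q})"
  then have j1: "j - 1 < length a"
    by auto
  then have "swapped_pairs a (id_word n) ! (j - 1) = {p, q}"
    using j nth_swapped_pairs[of "j - 1" a "id_word n"] by (simp add: Let_def)
  then have "j - 1 = i"
    using assms j1 nth_eq_iff_index_eq[OF assms(1), of "j - 1" i] by simp
  then show "Suc i \<le> j"
    using j by linarith
qed

lemma inversion_pairs_positions:
  assumes "distinct w" "{p, q} \<in> inversion_pairs w" "p < q"
  obtains i j where "i < j" "j < length w" "w ! i = q" "w ! j = p"
proof -
  obtain i j where ij: "i < j" "j < length w" "w ! j < w ! i" "{p, q} = {w ! i, w ! j}"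
    using assms(2) unfolding mem_inversion_pairs by blast
  then have "w ! i = q \<and> w ! j = p"
    using assms(3) by (auto simp: doubleton_eq_iff)
  with ij that show ?thesis
    by blast
qed

lemma triples_iff:
  assumes "distinct w"
  shows "(x, y, z) \<in> triples w \<longleftrightarrow>
    x < y \<and> y < z \<and> {x, y} \<in> inversion_pairs w \<and> {y, z} \<in> inversion_pairs w"
proof
  assume "(x, y, z) \<in> triples w"
  then obtain i j k where h: "x < y" "y < z" "i < j" "j < k" "k < length w"
    "w ! i = z" "w ! j = y" "w ! k = x"
    unfolding triples_def by blast
  moreover have "j < length w"
    using h by linarith
  ultimately have "{w ! j, w ! k} \<in> inversion_pairs w" "{w ! i, w ! j} \<in> inversion_pairs w"
    unfolding mem_inversion_pairs by blast+
  with h show "x < y \<and> y < z \<and> {x, y} \<in> inversion_pairs w \<and> {y, z} \<in> inversion_pairs w"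
    by (auto simp: insert_commute)
next
  assume h: "x < y \<and> y < z \<and> {x, y} \<in> inversion_pairs w \<and> {y, z} \<in> inversion_pairs w"
  obtain j k where jk: "j < k" "k < length w" "w ! j = y" "w ! k = x"
    using inversion_pairs_positions[OF assms, of x y] h by blast
  obtain i j' where ij: "i < j'" "j' < length w" "w ! i = z" "w ! j' = y"
    using inversion_pairs_positions[OF assms, of y z] h by blast
  have "j' = j"
    using jk ij nth_eq_iff_index_eq[OF assms] by auto
  then show "(x, y, z) \<in> triples w"
    unfolding triples_def using h jk ij by blast
qed

lemma triples_less: "(x, y, z) \<in> triples w \<Longrightarrow> x < y \<and> y < z"
  by (simp add: triples_def)

lemma finite_triples [simp]: "finite (triples w)"
proof -
  have "triples w \<subseteq> set w \<times> set w \<times> set w"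
    unfolding triples_def by auto
  then show ?thesis
    by (rule finite_subset) auto
qed

lemma Gamma_by_positions:
  assumes "a \<in> reduced_words n w" "i < length a" "j < length a"
    "swapped_pairs a (id_word n) ! i = {x, y}" "swapped_pairs a (id_word n) ! j = {y, z}"
  shows "Gamma n a (x, y, z) = (if j < i then 1 else 0)"
  using P_step_eq[OF reduced_words_swapped_pairs(1)[OF assms(1)], of i y x]
    P_step_eq[OF reduced_words_swapped_pairs(1)[OF assms(1)], of j z y] assms(2-)
  by (simp add: Gamma_def insert_commute)

lemma Gamma_eq_0_or_1: "Gamma n a \<tau> = 0 \<or> Gamma n a \<tau> = 1"
  unfolding Gamma_def by (simp split: prod.splits)

lemma triple_pair_positions:
  assumes "a \<in> reduced_words n w" "(x, y, z) \<in> triples w"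
  obtains i j where "i < length a" "j < length a"
    "swapped_pairs a (id_word n) ! i = {x, y}" "swapped_pairs a (id_word n) ! j = {y, z}"
proof -
  let ?L = "swapped_pairs a (id_word n)"
  have "{x, y} \<in> set ?L" "{y, z} \<in> set ?L"
    using assms triples_iff[OF is_perm_distinct[OF reduced_words_is_perm[OF assms(1)]]]
      reduced_words_swapped_pairs(2)[OF assms(1)] by auto
  then obtain i j where "i < length ?L" "?L ! i = {x, y}" "j < length ?L" "?L ! j = {y, z}"
    by (auto simp: in_set_conv_nth)
  then show ?thesis
    using that by simp
qed

lemma nth_mem_block_iff:
  assumes "distinct (X @ M @ Y)" "i < length (X @ M @ Y)"
  shows "(X @ M @ Y) ! i \<in> set M \<longleftrightarrow> length X \<le> i \<and> i < length X + length M"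
proof (cases "i < length X")
  case True
  then have "(X @ M @ Y) ! i \<in> set X"
    by (simp add: nth_append)
  then show ?thesis
    using True assms(1) by auto
next
  case False
  show ?thesis
  proof (cases "i < length X + length M")
    case True
    then have "i - length X < length M"
      using False by linarith
    then show ?thesis
      using False True by (simp add: nth_append)
  next
    case False2: False
    then have "\<not> i - length X < length M"
      by linarith
    then have "(X @ M @ Y) ! i \<in> set Y"
      using False assms(2) by (simp add: nth_append)
    then show ?thesis
      using False2 assms(1) by auto
  qed
qed

lemma block_permutation_index:
  assumes d: "distinct (X @ M @ Y)" "distinct (X @ M' @ Y)" and M: "set M' = set M"
    and t: "t < length (X @ M @ Y)" "t' < length (X @ M' @ Y)" "(X @ M' @ Y) ! t' = (X @ M @ Y) ! t"
  shows "(X @ M @ Y) ! t \<notin> set M \<Longrightarrow> t' = t \<and> (t < length X \<or> length X + length M \<le> t)"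
    and "(X @ M @ Y) ! t \<in> set M \<Longrightarrow>
      length X \<le> t \<and> t < length X + length M \<and> length X \<le> t' \<and> t' < length X + length M"
proof -
  have "distinct M" "distinct M'"
    using d by simp_all
  then have len: "length M' = length M"
    using M by (metis distinct_card)
  show "(X @ M @ Y) ! t \<in> set M \<Longrightarrow>
      length X \<le> t \<and> t < length X + length M \<and> length X \<le> t' \<and> t' < length X + length M"
    using nth_mem_block_iff[OF d(1) t(1)] nth_mem_block_iff[OF d(2) t(2)] t(3) M len by simp
  assume "(X @ M @ Y) ! t \<notin> set M"
  then have out: "t < length X \<or> length X + length M \<le> t"
    using nth_mem_block_iff[OF d(1) t(1)] by auto
  then have "(X @ M' @ Y) ! t = (X @ M @ Y) ! t"
    using len by (auto simp: nth_append)
  then have "t' = t"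
    using nth_eq_iff_index_eq[OF d(2) t(2), of t] t len by simp
  with out show "t' = t \<and> (t < length X \<or> length X + length M \<le> t)"
    by simp
qed

lemma Gamma_eq_block_permutation:
  assumes a: "a \<in> reduced_words n w" and b: "b \<in> reduced_words n w"
    and La: "swapped_pairs a (id_word n) = X @ M @ Y"
    and Lb: "swapped_pairs b (id_word n) = X @ M' @ Y"
    and M: "set M' = set M" and t: "(x, y, z) \<in> triples w"
    and not_both: "\<not> ({x, y} \<in> set M \<and> {y, z} \<in> set M)"
  shows "Gamma n a (x, y, z) = Gamma n b (x, y, z)"
proof -
  have d: "distinct (X @ M @ Y)" "distinct (X @ M' @ Y)"
    using reduced_words_swapped_pairs(1) a b La Lb by metis+
  obtain i j where ij: "i < length a" "j < length a"
    "(X @ M @ Y) ! i = {x, y}" "(X @ M @ Y) ! j = {y, z}"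
    using triple_pair_positions[OF a t] La by metis
  obtain i' j' where ij': "i' < length b" "j' < length b"
    "(X @ M' @ Y) ! i' = {x, y}" "(X @ M' @ Y) ! j' = {y, z}"
    using triple_pair_positions[OF b t] Lb by metis
  have "length (X @ M @ Y) = length a" "length (X @ M' @ Y) = length b"
    using La Lb length_swapped_pairs by metis+
  then have "(j < i) = (j' < i')"
    using block_permutation_index[OF d M, of i i'] block_permutation_index[OF d M, of j j'] ij ij' not_both
    by (cases "{x, y} \<in> set M"; cases "{y, z} \<in> set M") auto
  moreover have "Gamma n a (x, y, z) = (if j < i then 1 else 0)"
    using Gamma_by_positions[OF a ij(1,2)] ij(3,4) La by simp
  moreover have "Gamma n b (x, y, z) = (if j' < i' then 1 else 0)"
    using Gamma_by_positions[OF b ij'(1,2)] ij'(3,4) Lb by simp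
  ultimately show ?thesis
    by simp
qed

section \<open>Commutation and braid moves\<close>

lemma comm_step_sym: "comm_step a b \<Longrightarrow> comm_step b a"
proof (induction rule: comm_step.induct)
  case (1 i j xs ys)
  then have "comm_step (xs @ [j, i] @ ys) (xs @ [i, j] @ ys)"
    by (intro comm_step.intros) auto
  then show ?case
    by simp
qed

lemma comm_steps_sym: "comm_step\<^sup>*\<^sup>* a b \<Longrightarrow> comm_step\<^sup>*\<^sup>* b a"
  by (induction rule: rtranclp_induct) (auto intro: converse_rtranclp_into_rtranclp comm_step_sym)

lemma comm_step_append: "comm_step a b \<Longrightarrow> comm_step (a @ c) (b @ c)"
proof (induction rule: comm_step.induct)
  case (1 i j xs ys)
  then have "comm_step (xs @ [i, j] @ (ys @ c)) (xs @ [j, i] @ (ys @ c))"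
    by (rule comm_step.intros)
  then show ?case
    by simp
qed

lemma comm_steps_append: "comm_step\<^sup>*\<^sup>* a b \<Longrightarrow> comm_step\<^sup>*\<^sup>* (a @ c) (b @ c)"
  by (induction rule: rtranclp_induct) (auto intro: rtranclp.rtrancl_into_rtrancl comm_step_append)

lemma comm_class_eq_iff: "comm_class a = comm_class b \<longleftrightarrow> comm_step\<^sup>*\<^sup>* a b"
proof
  assume "comm_class a = comm_class b"
  then show "comm_step\<^sup>*\<^sup>* a b"
    unfolding comm_class_def by blast
next
  assume "comm_step\<^sup>*\<^sup>* a b"
  then show "comm_class a = comm_class b"
    unfolding comm_class_def using comm_steps_sym by (auto intro: rtranclp_trans)
qed

lemma comm_step_reduced_words: "comm_step a b \<Longrightarrow> a \<in> reduced_words n w \<Longrightarrow> b \<in> reduced_words n w"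
proof (induction rule: comm_step.induct)
  case (1 i j xs ys)
  then show ?case
    using swap_at_commute[of i "act xs (id_word n)" j] by (auto simp: reduced_words_def)
qed

lemma comm_steps_reduced_words:
  "comm_step\<^sup>*\<^sup>* a b \<Longrightarrow> a \<in> reduced_words n w \<Longrightarrow> b \<in> reduced_words n w"
  by (induction rule: rtranclp_induct) (auto intro: comm_step_reduced_words)

lemma braid_reduced_words_iff:
  "xs @ [i, i + 1, i] @ ys \<in> reduced_words n w \<longleftrightarrow> xs @ [i + 1, i, i + 1] @ ys \<in> reduced_words n w"
proof -
  have "act [i, i + 1, i] (act xs (id_word n)) = act [i + 1, i, i + 1] (act xs (id_word n))"
    if "1 \<le> i" "i + 1 < n"
    using swap_at_braid[of i "act xs (id_word n)"] that by simp
  then show ?thesis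
    by (auto simp: reduced_words_def)
qed

lemma Gamma_comm_step:
  assumes "comm_step a b" "a \<in> reduced_words n w" "\<tau> \<in> triples w"
  shows "Gamma n a \<tau> = Gamma n b \<tau>"
  using assms
proof (induction rule: comm_step.induct)
  case (1 i j xs ys)
  let ?u = "act xs (id_word n)"
  define A B where "A = {?u ! (i - 1), ?u ! i}" and "B = {?u ! (j - 1), ?u ! j}"
  let ?Y = "swapped_pairs ys (swap_at j (swap_at i ?u))"
  have ij: "1 \<le> i" "i < length ?u" "1 \<le> j" "j < length ?u"
    using "1.prems"(1) by (auto simp: reduced_words_def)
  have du: "distinct ?u"
    using is_perm_distinct[OF is_perm_act_id_word] "1.prems"(1) by (simp add: reduced_words_def)
  have "swap_at i ?u ! (j - 1) = ?u ! (j - 1)" "swap_at i ?u ! j = ?u ! j"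
    "swap_at j ?u ! (i - 1) = ?u ! (i - 1)" "swap_at j ?u ! i = ?u ! i"
    using "1.hyps" ij by (auto simp: nth_swap_at)
  then have La: "swapped_pairs (xs @ [i, j] @ ys) (id_word n) = swapped_pairs xs (id_word n) @ [A, B] @ ?Y"
    and Lb: "swapped_pairs (xs @ [j, i] @ ys) (id_word n) = swapped_pairs xs (id_word n) @ [B, A] @ ?Y"
    using swap_at_commute[OF ij(1-4) "1.hyps"] by (simp_all add: A_def B_def)
  obtain x y z where t: "\<tau> = (x, y, z)"
    by (cases \<tau>)
  have "A \<inter> B = {}"
    using du ij "1.hyps" by (auto simp: A_def B_def nth_eq_iff_index_eq)
  moreover have "x < y" "y < z"
    using "1.prems"(2) t triples_less by auto
  then have "{x, y} \<noteq> {y, z}"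
    by (auto simp: doubleton_eq_iff)
  \<comment> \<open>\<open>{x, y}\<close> and \<open>{y, z}\<close> are distinct and share \<open>y\<close>, but \<open>A\<close> and \<open>B\<close> are disjoint\<close>
  ultimately have "\<not> ({x, y} \<in> set [A, B] \<and> {y, z} \<in> set [A, B])"
    by auto
  moreover have "set [B, A] = set [A, B]"
    by auto
  ultimately show ?case
    using Gamma_eq_block_permutation[OF "1.prems"(1) _ La Lb]
      comm_step_reduced_words[OF comm_step.intros[OF "1.hyps"] "1.prems"(1)] "1.prems"(2) t by simp
qed

lemma Gamma_comm_steps:
  "comm_step\<^sup>*\<^sup>* a b \<Longrightarrow> a \<in> reduced_words n w \<Longrightarrow> \<tau> \<in> triples w \<Longrightarrow> Gamma n a \<tau> = Gamma n b \<tau>"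
proof (induction rule: rtranclp_induct)
  case (step b c)
  then show ?case
    using Gamma_comm_step[of b c n w \<tau>] comm_steps_reduced_words[OF step(1,4)] by simp
qed simp

lemma swapped_pairs_braid:
  assumes "1 \<le> i" "i + 1 < length u"
  shows "swapped_pairs [i, i + 1, i] u = [{u ! (i - 1), u ! i}, {u ! (i - 1), u ! (i + 1)}, {u ! i, u ! (i + 1)}]"
    and "swapped_pairs [i + 1, i, i + 1] u = [{u ! i, u ! (i + 1)}, {u ! (i - 1), u ! (i + 1)}, {u ! (i - 1), u ! i}]"
  using assms by (auto simp: nth_swap_at insert_commute)

lemma triple_eq_if_consecutive_pairs:
  fixes x y z p q r :: nat
  assumes "x < y" "y < z" "p < q" "q < r"
    and "{x, y} \<in> {{p, q}, {p, r}, {q, r}}" "{y, z} \<in> {{p, q}, {p, r}, {q, r}}"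
  shows "(x, y, z) = (p, q, r)"
  using assms by (simp add: doubleton_eq_iff) linarith

lemma braid_triple:
  assumes a: "xs @ [i, i + 1, i] @ ys \<in> reduced_words n w"
  defines "u \<equiv> act xs (id_word n)"
  shows "(u ! (i - 1), u ! i, u ! (i + 1)) \<in> triples w"
proof -
  have i: "1 \<le> i" "i + 1 < length u"
    using a by (auto simp: reduced_words_def u_def)
  have "u ! (i - 1) < u ! i"
    using reduced_words_ascent[of xs i "[i + 1, i] @ ys"] a by (simp add: u_def)
  moreover have "u ! i < u ! (i + 1)"
  proof -
    have "swap_at i u ! (i - 1) = u ! i" "swap_at i u ! (i + 1) = u ! (i + 1)"
      using i by (auto simp: nth_swap_at)
    then have "swap_at (i + 1) (swap_at i u) ! (i - 1) = u ! i"
      "swap_at (i + 1) (swap_at i u) ! i = u ! (i + 1)"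
      using i by (auto simp: nth_swap_at)
    then show ?thesis
      using reduced_words_ascent[of "xs @ [i, i + 1]" i ys n w] a by (simp add: u_def)
  qed
  moreover have "{u ! (i - 1), u ! i} \<in> inversion_pairs w" "{u ! i, u ! (i + 1)} \<in> inversion_pairs w"
    using swapped_pairs_braid(1)[OF i]
    unfolding reduced_words_swapped_pairs(2)[OF a, symmetric] by (simp_all add: u_def)
  ultimately show ?thesis
    using triples_iff[OF is_perm_distinct[OF reduced_words_is_perm[OF a]]] by simp
qed

text \<open>A long braid move reverses the order in which the three inversions of one triple are created.\<close>

lemma Gamma_braid:
  assumes a: "xs @ [i, i + 1, i] @ ys \<in> reduced_words n w"
  obtains \<tau>\<^sub>0 where "\<tau>\<^sub>0 \<in> triples w"
    "Gamma n (xs @ [i, i + 1, i] @ ys) \<tau>\<^sub>0 = 0" "Gamma n (xs @ [i + 1, i, i + 1] @ ys) \<tau>\<^sub>0 = 1"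
    "\<And>\<tau>. \<tau> \<in> triples w \<Longrightarrow> \<tau> \<noteq> \<tau>\<^sub>0 \<Longrightarrow>
       Gamma n (xs @ [i, i + 1, i] @ ys) \<tau> = Gamma n (xs @ [i + 1, i, i + 1] @ ys) \<tau>"
proof -
  let ?a = "xs @ [i, i + 1, i] @ ys" and ?b = "xs @ [i + 1, i, i + 1] @ ys"
  let ?u = "act xs (id_word n)"
  define p q r where "p = ?u ! (i - 1)" and "q = ?u ! i" and "r = ?u ! (i + 1)"
  have b: "?b \<in> reduced_words n w"
    using a braid_reduced_words_iff by blast
  have t: "(p, q, r) \<in> triples w"
    using braid_triple[OF a] by (simp add: p_def q_def r_def)
  have i: "1 \<le> i" "i + 1 < length ?u"
    using a by (auto simp: reduced_words_def)
  let ?Y = "swapped_pairs ys (act [i, i + 1, i] ?u)"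
  have La: "swapped_pairs ?a (id_word n) = swapped_pairs xs (id_word n) @ [{p, q}, {p, r}, {q, r}] @ ?Y"
    using swapped_pairs_braid(1)[OF i] by (simp add: p_def q_def r_def)
  have Lb: "swapped_pairs ?b (id_word n) = swapped_pairs xs (id_word n) @ [{q, r}, {p, r}, {p, q}] @ ?Y"
    using swapped_pairs_braid(2)[OF i] swap_at_braid[OF i] by (simp add: p_def q_def r_def)
  have "Gamma n ?a (p, q, r) = 0"
    using Gamma_by_positions[OF a, of "length xs" "length xs + 2" p q r] La by (simp add: nth_append)
  moreover have "Gamma n ?b (p, q, r) = 1"
    using Gamma_by_positions[OF b, of "length xs + 2" "length xs" p q r] Lb by (simp add: nth_append)
  moreover have "Gamma n ?a \<tau> = Gamma n ?b \<tau>" if "\<tau> \<in> triples w" "\<tau> \<noteq> (p, q, r)" for \<tau>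
  proof -
    obtain x y z where \<tau>: "\<tau> = (x, y, z)"
      by (cases \<tau>)
    then have "\<not> ({x, y} \<in> set [{p, q}, {p, r}, {q, r}] \<and> {y, z} \<in> set [{p, q}, {p, r}, {q, r}])"
      using triple_eq_if_consecutive_pairs[of x y z p q r] triples_less t that by auto
    moreover have "set [{q, r}, {p, r}, {p, q}] = set [{p, q}, {p, r}, {q, r}]"
      by (simp add: insert_commute)
    ultimately show ?thesis
      using Gamma_eq_block_permutation[OF a b La Lb _ that(1)[unfolded \<tau>]] \<tau> by simp
  qed
  ultimately show ?thesis
    using that t by blast
qed

section \<open>The greedy words are extremal\<close>

lemma swapped_pairs_snoc:
  assumes "b @ [k] \<in> reduced_words n w"
  shows "swapped_pairs (b @ [k]) (id_word n) = swapped_pairs b (id_word n) @ [{w ! (k - 1), w ! k}]"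
proof -
  have "k \<in> Des w" and "b \<in> reduced_words n (swap_at k w)"
    using assms reduced_words_snoc_iff[OF reduced_words_is_perm[OF assms]] by auto
  then show ?thesis
    by (auto simp: reduced_words_def mem_Des_iff nth_swap_at insert_commute)
qed

lemma triples_swap_at_Des:
  assumes "distinct w" "k \<in> Des w" "(x, y, z) \<in> triples w"
    and "{x, y} \<noteq> {w ! (k - 1), w ! k}" "{y, z} \<noteq> {w ! (k - 1), w ! k}"
  shows "(x, y, z) \<in> triples (swap_at k w)"
proof -
  have "distinct (swap_at k w)"
    using assms(1,2) by (simp add: mem_Des_iff)
  then show ?thesis
    using assms inversion_pairs_swap_at_Des(2)[OF assms(1,2)] triples_iff by simp
qed

lemma Gamma_snoc:
  assumes a: "b @ [k] \<in> reduced_words n w" and t: "(x, y, z) \<in> triples w"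
  defines "P \<equiv> {w ! (k - 1), w ! k}"
  shows "{y, z} = P \<Longrightarrow> Gamma n (b @ [k]) (x, y, z) = 0"
    and "{x, y} = P \<Longrightarrow> Gamma n (b @ [k]) (x, y, z) = 1"
    and "{x, y} \<noteq> P \<Longrightarrow> {y, z} \<noteq> P \<Longrightarrow> Gamma n (b @ [k]) (x, y, z) = Gamma n b (x, y, z)"
proof -
  let ?L = "swapped_pairs b (id_word n)"
  have L: "swapped_pairs (b @ [k]) (id_word n) = ?L @ [P]"
    using swapped_pairs_snoc[OF a] by (simp add: P_def)
  have dL: "distinct (?L @ [P])"
    using reduced_words_swapped_pairs(1)[OF a] L by simp
  have last_iff: "S = P \<longleftrightarrow> s = length ?L" if "s < length (?L @ [P])" "(?L @ [P]) ! s = S" for s S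
  proof -
    have "(?L @ [P]) ! length ?L = P" "length ?L < length (?L @ [P])"
      by (rule nth_append_length) simp
    then show ?thesis
      using that nth_eq_iff_index_eq[OF dL, of s "length ?L"] by metis
  qed
  obtain i j where ij: "i < length (b @ [k])" "j < length (b @ [k])"
    "(?L @ [P]) ! i = {x, y}" "(?L @ [P]) ! j = {y, z}"
    using triple_pair_positions[OF a t] L by metis
  have Gamma: "Gamma n (b @ [k]) (x, y, z) = (if j < i then 1 else 0)"
    using Gamma_by_positions[OF a ij(1,2)] ij(3,4) L by simp
  have "{x, y} \<noteq> {y, z}"
    using triples_less[OF t] by (auto simp: doubleton_eq_iff)
  then have "i \<noteq> j"
    using ij by auto
  show "{y, z} = P \<Longrightarrow> Gamma n (b @ [k]) (x, y, z) = 0"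
    using last_iff[of j "{y, z}"] ij \<open>i \<noteq> j\<close> Gamma by simp
  show "{x, y} = P \<Longrightarrow> Gamma n (b @ [k]) (x, y, z) = 1"
    using last_iff[of i "{x, y}"] ij \<open>i \<noteq> j\<close> Gamma by simp
  assume "{x, y} \<noteq> P" "{y, z} \<noteq> P"
  then have "i < length ?L" "j < length ?L"
    using last_iff[of i "{x, y}"] last_iff[of j "{y, z}"] ij by auto
  moreover have "b \<in> reduced_words n (swap_at k w)"
    using a reduced_words_snoc_iff[OF reduced_words_is_perm[OF a]] by auto
  ultimately show "Gamma n (b @ [k]) (x, y, z) = Gamma n b (x, y, z)"
    using Gamma Gamma_by_positions[of b] ij(3,4) by (simp add: nth_append)
qed

lemma triples_eq_empty_if_ninv_0:
  assumes "distinct w" "ninv w = 0"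
  shows "triples w = {}"
proof -
  have "inversion_pairs w = {}"
    using card_inversion_pairs[OF assms(1)] assms(2) by simp
  then show ?thesis
    using triples_iff[OF assms(1)] by auto
qed

text \<open>\<open>w\<close> increases up to position \<open>Min (Des w) - 1\<close>, so no larger value precedes that entry.\<close>

lemma Min_Des_pair_not_lower:
  assumes "distinct w" "m = Min (Des w)" "m \<in> Des w" "(x, y, z) \<in> triples w"
  shows "{x, y} \<noteq> {w ! (m - 1), w ! m}"
proof
  assume xy: "{x, y} = {w ! (m - 1), w ! m}"
  have m: "1 \<le> m" "m < length w" "w ! m < w ! (m - 1)"
    using assms(3) by (auto simp: mem_Des_iff)
  have "x < y" "y < z" "{y, z} \<in> inversion_pairs w"
    using assms(4) triples_iff[OF assms(1)] by auto
  then have y: "y = w ! (m - 1)"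
    using xy m by (auto simp: doubleton_eq_iff)
  obtain i j where ij: "i < j" "j < length w" "w ! i = z" "w ! j = y"
    using inversion_pairs_positions[OF assms(1) \<open>{y, z} \<in> inversion_pairs w\<close> \<open>y < z\<close>] .
  have "j = m - 1"
    using ij y m nth_eq_iff_index_eq[OF assms(1), of j "m - 1"] by simp
  moreover have "\<forall>e. i < e \<and> e \<le> m - 1 \<longrightarrow> e \<notin> Des w"
    using assms(2) m(1) by (auto dest: Min_le[OF finite_Des])
  ultimately have "w ! i < w ! (m - 1)"
    using nth_less_if_no_Des[OF assms(1), of i "m - 1"] ij m by simp
  then show False
    using ij y \<open>y < z\<close> by simp
qed

lemma Max_Des_pair_not_upper:
  assumes "distinct w" "m = Max (Des w)" "m \<in> Des w" "(x, y, z) \<in> triples w"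
  shows "{y, z} \<noteq> {w ! (m - 1), w ! m}"
proof
  assume yz: "{y, z} = {w ! (m - 1), w ! m}"
  have m: "1 \<le> m" "m < length w" "w ! m < w ! (m - 1)"
    using assms(3) by (auto simp: mem_Des_iff)
  have "x < y" "y < z" "{x, y} \<in> inversion_pairs w"
    using assms(4) triples_iff[OF assms(1)] by auto
  then have y: "y = w ! m"
    using yz m by (auto simp: doubleton_eq_iff)
  obtain j k where jk: "j < k" "k < length w" "w ! j = y" "w ! k = x"
    using inversion_pairs_positions[OF assms(1) \<open>{x, y} \<in> inversion_pairs w\<close> \<open>x < y\<close>] .
  have "j = m"
    using jk y m nth_eq_iff_index_eq[OF assms(1), of j m] by simp
  moreover have "\<forall>e. m < e \<and> e \<le> k \<longrightarrow> e \<notin> Des w"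
    using assms(2) by (auto dest: Max_ge[OF finite_Des])
  ultimately have "w ! m < w ! k"
    using nth_less_if_no_Des[OF assms(1), of m k] jk by simp
  then show False
    using jk y \<open>x < y\<close> by simp
qed

lemma Gamma_a_min:
  assumes "is_perm n w" "\<tau> \<in> triples w"
  shows "Gamma n (a_min w) \<tau> = 0"
  using assms
proof (induction "ninv w" arbitrary: w \<tau>)
  case 0
  then show ?case
    using triples_eq_empty_if_ninv_0[OF is_perm_distinct] by simp
next
  case (Suc k)
  let ?m = "Min (Des w)"
  have m: "?m \<in> Des w" and a: "a_min w = a_min (swap_at ?m w) @ [?m]"
    using Min_Des_mem[OF Suc.prems(1)] a_min_snoc[OF Suc.prems(1)] Suc.hyps(2) by auto
  have red: "a_min (swap_at ?m w) @ [?m] \<in> reduced_words n w"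
    using a_min_reduced[OF Suc.prems(1)] a by simp
  obtain x y z where \<tau>: "\<tau> = (x, y, z)"
    by (cases \<tau>)
  have xy: "{x, y} \<noteq> {w ! (?m - 1), w ! ?m}"
    using Min_Des_pair_not_lower[OF is_perm_distinct[OF Suc.prems(1)] refl m] Suc.prems(2) \<tau> by simp
  show ?case
  proof (cases "{y, z} = {w ! (?m - 1), w ! ?m}")
    case True
    then show ?thesis
      using Gamma_snoc(1)[OF red] Suc.prems(2) a \<tau> by simp
  next
    case False
    then have "(x, y, z) \<in> triples (swap_at ?m w)"
      using triples_swap_at_Des[OF is_perm_distinct[OF Suc.prems(1)] m] Suc.prems(2) \<tau> xy by simp
    moreover have "Gamma n (a_min w) \<tau> = Gamma n (a_min (swap_at ?m w)) (x, y, z)"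
      using Gamma_snoc(3)[OF red, of x y z] Suc.prems(2) a \<tau> xy False by simp
    moreover have "k = ninv (swap_at ?m w)"
      using ninv_swap_at_Des(1)[OF is_perm_distinct[OF Suc.prems(1)] m] Suc.hyps(2) by simp
    ultimately show ?thesis
      using Suc.hyps(1) is_perm_swap_at[OF Suc.prems(1) m] by simp
  qed
qed

lemma Gamma_a_max:
  assumes "is_perm n w" "\<tau> \<in> triples w"
  shows "Gamma n (a_max w) \<tau> = 1"
  using assms
proof (induction "ninv w" arbitrary: w \<tau>)
  case 0
  then show ?case
    using triples_eq_empty_if_ninv_0[OF is_perm_distinct] by simp
next
  case (Suc k)
  let ?m = "Max (Des w)"
  have m: "?m \<in> Des w" and a: "a_max w = a_max (swap_at ?m w) @ [?m]"
    using Max_Des_mem[OF Suc.prems(1)] a_max_snoc[OF Suc.prems(1)] Suc.hyps(2) by auto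
  have red: "a_max (swap_at ?m w) @ [?m] \<in> reduced_words n w"
    using a_max_reduced[OF Suc.prems(1)] a by simp
  obtain x y z where \<tau>: "\<tau> = (x, y, z)"
    by (cases \<tau>)
  have yz: "{y, z} \<noteq> {w ! (?m - 1), w ! ?m}"
    using Max_Des_pair_not_upper[OF is_perm_distinct[OF Suc.prems(1)] refl m] Suc.prems(2) \<tau> by simp
  show ?case
  proof (cases "{x, y} = {w ! (?m - 1), w ! ?m}")
    case True
    then show ?thesis
      using Gamma_snoc(2)[OF red] Suc.prems(2) a \<tau> by simp
  next
    case False
    then have "(x, y, z) \<in> triples (swap_at ?m w)"
      using triples_swap_at_Des[OF is_perm_distinct[OF Suc.prems(1)] m] Suc.prems(2) \<tau> yz by simp
    moreover have "Gamma n (a_max w) \<tau> = Gamma n (a_max (swap_at ?m w)) (x, y, z)"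
      using Gamma_snoc(3)[OF red, of x y z] Suc.prems(2) a \<tau> yz False by simp
    moreover have "k = ninv (swap_at ?m w)"
      using ninv_swap_at_Des(1)[OF is_perm_distinct[OF Suc.prems(1)] m] Suc.hyps(2) by simp
    ultimately show ?thesis
      using Suc.hyps(1) is_perm_swap_at[OF Suc.prems(1) m] by simp
  qed
qed

section \<open>Braid moves towards the greedy words\<close>

definition braid_up :: "nat list \<Rightarrow> nat list \<Rightarrow> bool" where
  "braid_up a b \<longleftrightarrow> (\<exists>xs i ys. a = xs @ [i, i + 1, i] @ ys \<and> b = xs @ [i + 1, i, i + 1] @ ys)"

abbreviation up_moves :: "nat list \<Rightarrow> nat list \<Rightarrow> bool" where
  "up_moves \<equiv> (\<lambda>a b. comm_step a b \<or> braid_up a b)\<^sup>*\<^sup>*"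

lemma braid_up_append: "braid_up a b \<Longrightarrow> braid_up (a @ c) (b @ c)"
  unfolding braid_up_def by (metis append.assoc)

lemma up_moves_append: "up_moves a b \<Longrightarrow> up_moves (a @ c) (b @ c)"
  by (induction rule: rtranclp_induct)
    (auto intro: rtranclp.rtrancl_into_rtrancl comm_step_append braid_up_append)

lemma comm_steps_up_moves: "comm_step\<^sup>*\<^sup>* a b \<Longrightarrow> up_moves a b"
  by (induction rule: rtranclp_induct) (auto intro: rtranclp.rtrancl_into_rtrancl)

lemma up_moves_reduced_words_iff:
  "up_moves a b \<Longrightarrow> a \<in> reduced_words n w \<longleftrightarrow> b \<in> reduced_words n w"
proof (induction rule: rtranclp_induct)
  case (step b c)
  then have "b \<in> reduced_words n w \<longleftrightarrow> c \<in> reduced_words n w"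
    using comm_step_reduced_words comm_step_sym braid_reduced_words_iff
    unfolding braid_up_def by blast
  with step.IH show ?case
    by simp
qed simp

lemma Min_Des_swap_at:
  assumes "is_perm n w" "j \<in> Des w" "Min (Des w) < j"
  shows "Min (Des w) \<in> Des (swap_at j w)" and "Min (Des (swap_at j w)) = Min (Des w)"
proof -
  let ?m = "Min (Des w)" and ?v = "swap_at j w"
  have m: "?m \<in> Des w"
    using assms(2) by (auto intro: Min_in)
  have ms: "1 \<le> ?m" "w ! ?m < w ! (?m - 1)" and js: "1 \<le> j" "j < length w" "w ! j < w ! (j - 1)"
    using m assms(2) by (auto simp: mem_Des_iff)
  \<comment> \<open>if \<open>j = m + 1\<close>, the descents at \<open>m\<close> and \<open>m + 1\<close> give \<open>w ! (m + 1) < w ! (m - 1)\<close>\<close>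
  show mv: "?m \<in> Des ?v"
    using ms js assms(3) by (auto simp: mem_Des_iff nth_swap_at)
  have "e \<in> Des w" if "e < ?m" "e \<in> Des ?v" for e
    using that js assms(3) by (auto simp: mem_Des_iff nth_swap_at split: if_splits)
  then have "?m \<le> e" if "e \<in> Des ?v" for e
    using that by (meson Min_le finite_Des not_less)
  then show "Min (Des ?v) = ?m"
    using mv by (intro Min_eqI) auto
qed

lemma Max_Des_swap_at:
  assumes "is_perm n w" "j \<in> Des w" "j < Max (Des w)"
  shows "Max (Des w) \<in> Des (swap_at j w)" and "Max (Des (swap_at j w)) = Max (Des w)"
proof -
  let ?m = "Max (Des w)" and ?v = "swap_at j w"
  have m: "?m \<in> Des w"
    using assms(2) by (auto intro: Max_in)
  have ms: "?m < length w" "w ! ?m < w ! (?m - 1)" and js: "1 \<le> j" "w ! j < w ! (j - 1)"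
    using m assms(2) by (auto simp: mem_Des_iff)
  show mv: "?m \<in> Des ?v"
    using ms js assms(3) by (auto simp: mem_Des_iff nth_swap_at)
  have "e \<in> Des w" if "?m < e" "e \<in> Des ?v" for e
    using that js assms(3) by (auto simp: mem_Des_iff nth_swap_at split: if_splits)
  then have "e \<le> ?m" if "e \<in> Des ?v" for e
    using that by (meson Max_ge finite_Des not_less)
  then show "Max (Des ?v) = ?m"
    using mv by (intro Max_eqI) auto
qed

text \<open>If \<open>u ! (d - 1)\<close> exceeds all entries to its left, the descent at \<open>d\<close> survives every
  greedy step before it, and the letters of \<open>a_min u\<close> after \<open>d\<close> are all at distance at least 2
  from \<open>d\<close>, so \<open>d\<close> commutes to the end.\<close>

lemma a_min_comm_last:
  assumes "is_perm n u" "d \<in> Des u" "\<forall>i < d - 1. u ! i < u ! (d - 1)"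
  shows "\<exists>x. comm_step\<^sup>*\<^sup>* (a_min u) (x @ [d])"
  using assms
proof (induction "ninv u" arbitrary: u)
  case 0
  then show ?case
    using ninv_swap_at_Des(2)[OF is_perm_distinct] by fastforce
next
  case (Suc k)
  let ?r = "Min (Des u)" let ?v = "swap_at ?r u"
  have r: "?r \<in> Des u" and a: "a_min u = a_min ?v @ [?r]"
    using Min_Des_mem[OF Suc.prems(1)] a_min_snoc[OF Suc.prems(1)] Suc.hyps(2) by auto
  have rs: "1 \<le> ?r" "?r < length u" "u ! ?r < u ! (?r - 1)"
    and ds: "1 \<le> d" "d < length u" "u ! d < u ! (d - 1)"
    using r Suc.prems(2) by (auto simp: mem_Des_iff)
  show ?case
  proof (cases "?r = d")
    case True
    then show ?thesis
      using a by auto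
  next
    case False
    have "?r \<le> d"
      using Suc.prems(2) by simp
    moreover have "?r \<noteq> d - 1"
    proof
      assume "?r = d - 1"
      then have "u ! (?r - 1) < u ! ?r"
        using Suc.prems(3)[rule_format, of "?r - 1"] rs(1) by simp
      with rs(3) show False
        by simp
    qed
    ultimately have far: "?r + 2 \<le> d"
      using False by linarith
    have dv: "d \<in> Des ?v"
      using far rs ds by (auto simp: mem_Des_iff nth_swap_at)
    have "\<forall>i < d - 1. ?v ! i < ?v ! (d - 1)"
      using Suc.prems(3) far rs ds by (auto simp: nth_swap_at)
    moreover have "k = ninv ?v"
      using ninv_swap_at_Des(1)[OF is_perm_distinct[OF Suc.prems(1)] r] Suc.hyps(2) by simp
    ultimately obtain x where "comm_step\<^sup>*\<^sup>* (a_min ?v) (x @ [d])"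
      using Suc.hyps(1) is_perm_swap_at[OF Suc.prems(1) r] dv by blast
    then have "comm_step\<^sup>*\<^sup>* (a_min u) (x @ [d, ?r])"
      using comm_steps_append[of "a_min ?v" "x @ [d]" "[?r]"] a by simp
    moreover have "comm_step (x @ [d, ?r] @ []) (x @ [?r, d] @ [])"
      using far by (intro comm_step.intros) simp
    ultimately have "comm_step\<^sup>*\<^sup>* (a_min u) ((x @ [?r]) @ [d])"
      by simp
    then show ?thesis
      by blast
  qed
qed

lemma a_max_comm_last:
  assumes "is_perm n u" "d \<in> Des u" "\<forall>i. d < i \<and> i < length u \<longrightarrow> u ! d < u ! i"
  shows "\<exists>x. comm_step\<^sup>*\<^sup>* (a_max u) (x @ [d])"
  using assms
proof (induction "ninv u" arbitrary: u)
  case 0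
  then show ?case
    using ninv_swap_at_Des(2)[OF is_perm_distinct] by fastforce
next
  case (Suc k)
  let ?r = "Max (Des u)" let ?v = "swap_at ?r u"
  have r: "?r \<in> Des u" and a: "a_max u = a_max ?v @ [?r]"
    using Max_Des_mem[OF Suc.prems(1)] a_max_snoc[OF Suc.prems(1)] Suc.hyps(2) by auto
  have rs: "1 \<le> ?r" "?r < length u" "u ! ?r < u ! (?r - 1)"
    and ds: "1 \<le> d" "d < length u" "u ! d < u ! (d - 1)"
    using r Suc.prems(2) by (auto simp: mem_Des_iff)
  show ?case
  proof (cases "?r = d")
    case True
    then show ?thesis
      using a by auto
  next
    case False
    have "d \<le> ?r"
      using Suc.prems(2) by simp
    moreover have "?r \<noteq> d + 1"
      using Suc.prems(3) rs by force
    ultimately have far: "d + 2 \<le> ?r"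
      using False by linarith
    have dv: "d \<in> Des ?v"
      using far rs ds by (auto simp: mem_Des_iff nth_swap_at)
    have "d < ?r - 1" "?r - 1 < length u"
      using far rs(2) by linarith+
    then have "u ! d < u ! (?r - 1)" "u ! d < u ! ?r"
      using Suc.prems(3) far rs(2) by simp_all
    then have "\<forall>i. d < i \<and> i < length ?v \<longrightarrow> ?v ! d < ?v ! i"
      using Suc.prems(3) far rs ds by (auto simp: nth_swap_at)
    moreover have "k = ninv ?v"
      using ninv_swap_at_Des(1)[OF is_perm_distinct[OF Suc.prems(1)] r] Suc.hyps(2) by simp
    ultimately obtain x where "comm_step\<^sup>*\<^sup>* (a_max ?v) (x @ [d])"
      using Suc.hyps(1) is_perm_swap_at[OF Suc.prems(1) r] dv by blast
    then have "comm_step\<^sup>*\<^sup>* (a_max u) (x @ [d, ?r])"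
      using comm_steps_append[of "a_max ?v" "x @ [d]" "[?r]"] a by simp
    moreover have "comm_step (x @ [d, ?r] @ []) (x @ [?r, d] @ [])"
      using far by (intro comm_step.intros) simp
    ultimately have "comm_step\<^sup>*\<^sup>* (a_max u) ((x @ [?r]) @ [d])"
      by simp
    then show ?thesis
      by blast
  qed
qed

lemma braid_up_snoc: "braid_up (x @ [i, i + 1, i]) (x @ [i + 1, i, i + 1])"
  unfolding braid_up_def by (metis append_Nil2)

lemma Min_Des_adjacent_swaps:
  assumes w: "is_perm n w" and j: "j \<in> Des w" "j = Min (Des w) + 1"
  defines "u \<equiv> swap_at (j - 1) (swap_at j w)"
  shows "j \<in> Des u" and "\<forall>i < j - 1. u ! i < u ! (j - 1)"
proof -
  let ?m = "Min (Des w)"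
  have jm: "j - 1 = ?m"
    using j(2) by simp
  have "?m \<in> Des w"
    using j(1) by (auto intro: Min_in)
  then have m: "1 \<le> ?m" "w ! ?m < w ! (?m - 1)" and js: "j < length w" "w ! j < w ! (j - 1)"
    using j(1) by (auto simp: mem_Des_iff)
  have u: "u ! (?m - 1) = w ! j" "u ! ?m = w ! (?m - 1)" "u ! j = w ! ?m"
    "\<And>i. i < ?m - 1 \<Longrightarrow> u ! i = w ! i"
    using j(2) m js unfolding u_def jm by (auto simp: nth_swap_at)
  have "length u = length w"
    by (simp add: u_def)
  then show "j \<in> Des u"
    using u(2,3) m js j(2) by (simp add: mem_Des_iff)
  show "\<forall>i < j - 1. u ! i < u ! (j - 1)"
  proof (intro allI impI)
    fix i
    assume "i < j - 1"
    then consider "i = ?m - 1" | "i < ?m - 1"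
      using jm by linarith
    then show "u ! i < u ! (j - 1)"
    proof cases
      case 1
      have "w ! j < w ! (?m - 1)"
        using js(2) m(2) unfolding jm by linarith
      then show ?thesis
        using 1 u(1,2) unfolding jm by simp
    next
      case 2
      have "\<forall>e. i < e \<and> e \<le> ?m - 1 \<longrightarrow> e \<notin> Des w"
        using m(1) by (auto dest: Min_le[OF finite_Des])
      moreover have "?m - 1 < length w"
        using jm js(1) by linarith
      ultimately have "w ! i < w ! (?m - 1)"
        using nth_less_if_no_Des[OF is_perm_distinct[OF w] 2] by blast
      then show ?thesis
        using 2 u(2,4) unfolding jm by simp
    qed
  qed
qed

lemma a_min_exchange:
  assumes w: "is_perm n w" and j: "j \<in> Des w" "j \<noteq> Min (Des w)"
  shows "\<exists>c. up_moves (c @ [Min (Des w)]) (a_min (swap_at j w) @ [j])"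
proof -
  let ?m = "Min (Des w)" and ?v = "swap_at j w"
  have "?m \<le> j"
    using j(1) by simp
  with j(2) have mj: "?m < j"
    by simp
  have v: "is_perm n ?v"
    using is_perm_swap_at[OF w j(1)] .
  have mv: "?m \<in> Des ?v" and "Min (Des ?v) = ?m"
    using Min_Des_swap_at[OF w j(1) mj] by auto
  let ?u = "swap_at ?m ?v"
  have av: "a_min ?v = a_min ?u @ [?m]"
    using a_min_snoc[OF v] ninv_swap_at_Des(2)[OF is_perm_distinct[OF v] mv] \<open>Min (Des ?v) = ?m\<close>
    by simp
  show ?thesis
  proof (cases "j = ?m + 1")
    case False
    then have "comm_step (a_min ?u @ [?m, j] @ []) (a_min ?u @ [j, ?m] @ [])"
      using mj by (intro comm_step.intros) simp
    from comm_step_sym[OF this] have "up_moves ((a_min ?u @ [j]) @ [?m]) (a_min ?v @ [j])"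
      using av by (simp add: r_into_rtranclp)
    then show ?thesis
      by blast
  next
    case True
    then have "j - 1 = ?m"
      by simp
    then have "j \<in> Des ?u" "\<forall>i < j - 1. ?u ! i < ?u ! (j - 1)"
      using Min_Des_adjacent_swaps[OF w j(1) True] by simp_all
    then obtain x where "comm_step\<^sup>*\<^sup>* (a_min ?u) (x @ [j])"
      using a_min_comm_last[OF is_perm_swap_at[OF v mv]] by blast
    then have "comm_step\<^sup>*\<^sup>* (x @ [j] @ [?m, j]) (a_min ?v @ [j])"
      using comm_steps_sym[OF comm_steps_append[of "a_min ?u" "x @ [j]" "[?m, j]"]] av by simp
    then have "up_moves (x @ [?m + 1, ?m, ?m + 1]) (a_min ?v @ [j])"
      using comm_steps_up_moves True by simp
    then have "up_moves (x @ [?m, ?m + 1, ?m]) (a_min ?v @ [j])"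
      using converse_rtranclp_into_rtranclp[of "\<lambda>a b. comm_step a b \<or> braid_up a b"] braid_up_snoc
      by blast
    then show ?thesis
      by (intro exI[of _ "x @ [?m, ?m + 1]"]) simp
  qed
qed

lemma Max_Des_adjacent_swaps:
  assumes w: "is_perm n w" and j: "j \<in> Des w" "Max (Des w) = j + 1"
  defines "u \<equiv> swap_at (j + 1) (swap_at j w)"
  shows "j \<in> Des u" and "\<forall>i. j < i \<and> i < length u \<longrightarrow> u ! j < u ! i"
proof -
  let ?m = "Max (Des w)"
  have "?m \<in> Des w"
    using j(1) by (auto intro: Max_in)
  then have m: "?m < length w" "w ! ?m < w ! (?m - 1)" and js: "1 \<le> j" "w ! j < w ! (j - 1)"
    using j(1) by (auto simp: mem_Des_iff)
  have u: "u ! (j - 1) = w ! j" "u ! j = w ! ?m" "u ! ?m = w ! (j - 1)"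
    "\<And>i. ?m < i \<Longrightarrow> i < length w \<Longrightarrow> u ! i = w ! i"
    using j(2) m js unfolding u_def by (auto simp: nth_swap_at)
  have "length u = length w"
    by (simp add: u_def)
  then show "j \<in> Des u"
    using u(1,2) m js j(2) by (simp add: mem_Des_iff)
  show "\<forall>i. j < i \<and> i < length u \<longrightarrow> u ! j < u ! i"
  proof (intro allI impI)
    fix i
    assume i: "j < i \<and> i < length u"
    then consider "i = ?m" | "?m < i"
      using j(2) by linarith
    then show "u ! j < u ! i"
    proof cases
      case 1
      have "w ! ?m < w ! (j - 1)"
        using js(2) m(2) unfolding j(2) by simp
      then show ?thesis
        using 1 u(2,3) by simp
    next
      case 2
      have "\<forall>e. ?m < e \<and> e \<le> i \<longrightarrow> e \<notin> Des w"
        by (auto dest: Max_ge[OF finite_Des])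
      moreover have "i < length w"
        using i by (simp add: u_def)
      ultimately have "w ! ?m < w ! i"
        using nth_less_if_no_Des[OF is_perm_distinct[OF w] 2] by blast
      then show ?thesis
        using 2 i u(2,4) by (simp add: u_def)
    qed
  qed
qed

lemma a_max_exchange:
  assumes w: "is_perm n w" and j: "j \<in> Des w" "j \<noteq> Max (Des w)"
  shows "\<exists>c. up_moves (a_max (swap_at j w) @ [j]) (c @ [Max (Des w)])"
proof -
  let ?m = "Max (Des w)" and ?v = "swap_at j w"
  have "j \<le> ?m"
    using j(1) by simp
  with j(2) have mj: "j < ?m"
    by simp
  have v: "is_perm n ?v"
    using is_perm_swap_at[OF w j(1)] .
  have mv: "?m \<in> Des ?v" and "Max (Des ?v) = ?m"
    using Max_Des_swap_at[OF w j(1) mj] by auto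
  let ?u = "swap_at ?m ?v"
  have av: "a_max ?v = a_max ?u @ [?m]"
    using a_max_snoc[OF v] ninv_swap_at_Des(2)[OF is_perm_distinct[OF v] mv] \<open>Max (Des ?v) = ?m\<close>
    by simp
  show ?thesis
  proof (cases "?m = j + 1")
    case False
    then have "comm_step (a_max ?u @ [?m, j] @ []) (a_max ?u @ [j, ?m] @ [])"
      using mj by (intro comm_step.intros) simp
    then have "up_moves (a_max ?v @ [j]) ((a_max ?u @ [j]) @ [?m])"
      using av by (simp add: r_into_rtranclp)
    then show ?thesis
      by blast
  next
    case True
    then have "j \<in> Des ?u" "\<forall>i. j < i \<and> i < length ?u \<longrightarrow> ?u ! j < ?u ! i"
      using Max_Des_adjacent_swaps[OF w j(1) True] by simp_all
    then obtain x where "comm_step\<^sup>*\<^sup>* (a_max ?u) (x @ [j])"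
      using a_max_comm_last[OF is_perm_swap_at[OF v mv]] by blast
    then have "comm_step\<^sup>*\<^sup>* (a_max ?v @ [j]) (x @ [j] @ [?m, j])"
      using comm_steps_append[of "a_max ?u" "x @ [j]" "[?m, j]"] av by simp
    then have "up_moves (a_max ?v @ [j]) (x @ [j, j + 1, j])"
      using comm_steps_up_moves True by simp
    then have "up_moves (a_max ?v @ [j]) (x @ [j + 1, j, j + 1])"
      using rtranclp.rtrancl_into_rtrancl[of "\<lambda>a b. comm_step a b \<or> braid_up a b"] braid_up_snoc
      by blast
    then show ?thesis
      using True by (intro exI[of _ "x @ [j + 1, j]"]) simp
  qed
qed

lemma up_moves_a_min:
  assumes "a \<in> reduced_words n w"
  shows "up_moves (a_min w) a"
  using assms
proof (induction "ninv w" arbitrary: a w rule: less_induct)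
  case less
  have w: "is_perm n w"
    using reduced_words_is_perm[OF less.prems] .
  show ?case
  proof (cases a rule: rev_exhaust)
    case Nil
    then show ?thesis
      using less.prems by (simp add: reduced_words_def a_min_def)
  next
    case (snoc b j)
    let ?m = "Min (Des w)"
    have j: "j \<in> Des w" and b: "b \<in> reduced_words n (swap_at j w)"
      using less.prems snoc reduced_words_snoc_iff[OF w] by auto
    have smaller: "ninv (swap_at e w) < ninv w" if "e \<in> Des w" for e
      using ninv_swap_at_Des[OF is_perm_distinct[OF w] that] by simp
    obtain c where c: "up_moves (c @ [?m]) (a_min (swap_at j w) @ [j])"
    proof (cases "j = ?m")
      case True
      then show ?thesis
        using that[of "a_min (swap_at j w)"] by simp
    next
      case False
      then show ?thesis
        using a_min_exchange[OF w j] that by blast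
    qed
    have "up_moves (a_min w) (c @ [?m])"
    proof -
      have "a_min (swap_at j w) @ [j] \<in> reduced_words n w"
        using reduced_words_snoc_iff[OF w] j a_min_reduced[OF is_perm_swap_at[OF w j]] by simp
      then have "c @ [?m] \<in> reduced_words n w"
        using up_moves_reduced_words_iff[OF c] by simp
      then have "?m \<in> Des w" "c \<in> reduced_words n (swap_at ?m w)"
        using reduced_words_snoc_iff[OF w] by auto
      then show ?thesis
        using up_moves_append[OF less.hyps[OF smaller]] a_min_snoc[OF w]
          ninv_swap_at_Des(2)[OF is_perm_distinct[OF w] j]
        by simp
    qed
    also note c
    also have "up_moves (a_min (swap_at j w) @ [j]) a"
      using up_moves_append[OF less.hyps[OF smaller[OF j] b]] snoc by simp
    finally show ?thesis .
  qed
qed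

lemma up_moves_a_max:
  assumes "a \<in> reduced_words n w"
  shows "up_moves a (a_max w)"
  using assms
proof (induction "ninv w" arbitrary: a w rule: less_induct)
  case less
  have w: "is_perm n w"
    using reduced_words_is_perm[OF less.prems] .
  show ?case
  proof (cases a rule: rev_exhaust)
    case Nil
    then show ?thesis
      using less.prems by (simp add: reduced_words_def a_max_def)
  next
    case (snoc b j)
    let ?m = "Max (Des w)"
    have j: "j \<in> Des w" and b: "b \<in> reduced_words n (swap_at j w)"
      using less.prems snoc reduced_words_snoc_iff[OF w] by auto
    have smaller: "ninv (swap_at e w) < ninv w" if "e \<in> Des w" for e
      using ninv_swap_at_Des[OF is_perm_distinct[OF w] that] by simp
    obtain c where c: "up_moves (a_max (swap_at j w) @ [j]) (c @ [?m])"
    proof (cases "j = ?m")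
      case True
      then show ?thesis
        using that[of "a_max (swap_at j w)"] by simp
    next
      case False
      then show ?thesis
        using a_max_exchange[OF w j] that by blast
    qed
    have "up_moves a (a_max (swap_at j w) @ [j])"
      using up_moves_append[OF less.hyps[OF smaller[OF j] b]] snoc by simp
    also note c
    also have "up_moves (c @ [?m]) (a_max w)"
    proof -
      have "a_max (swap_at j w) @ [j] \<in> reduced_words n w"
        using reduced_words_snoc_iff[OF w] j a_max_reduced[OF is_perm_swap_at[OF w j]] by simp
      then have "c @ [?m] \<in> reduced_words n w"
        using up_moves_reduced_words_iff[OF c] by simp
      then have "?m \<in> Des w" "c \<in> reduced_words n (swap_at ?m w)"
        using reduced_words_snoc_iff[OF w] by auto
      then show ?thesis
        using up_moves_append[OF less.hyps[OF smaller]] a_max_snoc[OF w]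
          ninv_swap_at_Des(2)[OF is_perm_distinct[OF w] j]
        by simp
    qed
    finally show ?thesis .
  qed
qed

section \<open>Distances in the graph of commutation classes\<close>

lemma finite_supp [simp]: "finite (supp n w a)"
  unfolding supp_def by simp

lemma t_dist_eq_card_Un:
  "t_dist n w a b = card ((supp n w a - supp n w b) \<union> (supp n w b - supp n w a))"
proof -
  have "Gamma n a \<tau> \<noteq> Gamma n b \<tau> \<longleftrightarrow> (Gamma n a \<tau> = 1) \<noteq> (Gamma n b \<tau> = 1)" for \<tau>
    using Gamma_eq_0_or_1[of n a \<tau>] Gamma_eq_0_or_1[of n b \<tau>] by auto
  then have "{\<tau> \<in> triples w. Gamma n a \<tau> \<noteq> Gamma n b \<tau>}
      = (supp n w a - supp n w b) \<union> (supp n w b - supp n w a)"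
    unfolding supp_def by auto
  then show ?thesis
    unfolding t_dist_def by simp
qed

lemma t_dist_eq_card_Diff:
  "supp n w a \<subseteq> supp n w b \<Longrightarrow> t_dist n w a b = card (supp n w b - supp n w a)"
  unfolding t_dist_eq_card_Un by (simp add: Diff_eq_empty_iff[THEN iffD2])

lemma t_dist_triangle: "t_dist n w a c \<le> t_dist n w a b + t_dist n w b c"
proof -
  let ?D = "\<lambda>a b. {\<tau> \<in> triples w. Gamma n a \<tau> \<noteq> Gamma n b \<tau>}"
  have "card (?D a c) \<le> card (?D a b \<union> ?D b c)"
    by (rule card_mono) auto
  also have "\<dots> \<le> card (?D a b) + card (?D b c)"
    by (rule card_Un_le)
  finally show ?thesis
    unfolding t_dist_def .
qed

lemma t_dist_comm_steps:
  assumes "comm_step\<^sup>*\<^sup>* a a'" "a \<in> reduced_words n w" "comm_step\<^sup>*\<^sup>* b b'" "b \<in> reduced_words n w"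
  shows "t_dist n w a' b' = t_dist n w a b"
proof -
  have "{\<tau> \<in> triples w. Gamma n a' \<tau> \<noteq> Gamma n b' \<tau>} = {\<tau> \<in> triples w. Gamma n a \<tau> \<noteq> Gamma n b \<tau>}"
    using Gamma_comm_steps[OF assms(1,2)] Gamma_comm_steps[OF assms(3,4)] by auto
  then show ?thesis
    unfolding t_dist_def by simp
qed

lemma t_dist_braid_step:
  assumes "braid_step a b" "a \<in> reduced_words n w"
  shows "t_dist n w a b \<le> 1"
proof -
  obtain xs i ys where ab: "{a, b} = {xs @ [i, i + 1, i] @ ys, xs @ [i + 1, i, i + 1] @ ys}"
    using assms(1) by (cases rule: braid_step.cases) auto
  then have "xs @ [i, i + 1, i] @ ys \<in> reduced_words n w"
    using assms(2) braid_reduced_words_iff by (auto simp: doubleton_eq_iff)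
  then obtain \<tau>\<^sub>0 where "\<And>\<tau>. \<tau> \<in> triples w \<Longrightarrow> \<tau> \<noteq> \<tau>\<^sub>0 \<Longrightarrow>
      Gamma n (xs @ [i, i + 1, i] @ ys) \<tau> = Gamma n (xs @ [i + 1, i, i + 1] @ ys) \<tau>"
    by (rule Gamma_braid) blast
  then have "\<And>\<tau>. \<tau> \<in> triples w \<Longrightarrow> \<tau> \<noteq> \<tau>\<^sub>0 \<Longrightarrow> Gamma n a \<tau> = Gamma n b \<tau>"
    using ab by (auto simp: doubleton_eq_iff)
  then have "{\<tau> \<in> triples w. Gamma n a \<tau> \<noteq> Gamma n b \<tau>} \<subseteq> {\<tau>\<^sub>0}"
    by blast
  then have "card {\<tau> \<in> triples w. Gamma n a \<tau> \<noteq> Gamma n b \<tau>} \<le> card {\<tau>\<^sub>0}"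
    by (rule card_mono[rotated]) simp
  then show ?thesis
    unfolding t_dist_def by simp
qed

text \<open>Each edge of \<open>C(w)\<close> changes \<open>\<Gamma>\<close> on at most one triple, so \<open>t\<close> bounds the distance from below.\<close>

lemma t_dist_le_if_C_adj_path:
  "(C_adj n w ^^ k) (comm_class a) B \<Longrightarrow> B = comm_class b \<Longrightarrow> a \<in> reduced_words n w \<Longrightarrow>
   b \<in> reduced_words n w \<Longrightarrow> t_dist n w a b \<le> k"
proof (induction k arbitrary: B b)
  case 0
  then have "comm_step\<^sup>*\<^sup>* a b"
    using comm_class_eq_iff by simp
  then have "t_dist n w a b = t_dist n w a a"
    using t_dist_comm_steps[OF rtranclp.rtrancl_refl _ _ "0.prems"(3)] "0.prems"(3) by blast
  then show ?case
    by (simp add: t_dist_def)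
next
  case (Suc k)
  obtain M where M: "(C_adj n w ^^ k) (comm_class a) M" "C_adj n w M B"
    using Suc.prems(1) by (rule relpowp_Suc_E)
  then obtain c where c: "c \<in> reduced_words n w" "M = comm_class c"
    unfolding C_adj_def C_vertices_def by blast
  obtain c' b' where cb: "c' \<in> M" "b' \<in> B" "braid_step c' b'"
    using M(2) unfolding C_adj_def by blast
  have cc: "comm_step\<^sup>*\<^sup>* c c'" and bb: "comm_step\<^sup>*\<^sup>* b b'"
    using cb(1,2) c(2) Suc.prems(2) unfolding comm_class_def by simp_all
  have "t_dist n w c b = t_dist n w c' b'"
    using t_dist_comm_steps[OF cc c(1) bb Suc.prems(4)] by simp
  also have "\<dots> \<le> 1"
    using t_dist_braid_step[OF cb(3) comm_steps_reduced_words[OF cc c(1)]] .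
  finally have "t_dist n w c b \<le> 1" .
  moreover have "t_dist n w a c \<le> k"
    using Suc.IH[OF M(1) c(2) Suc.prems(3) c(1)] .
  ultimately show ?case
    using t_dist_triangle[of n w a b c] by simp
qed

lemma supp_comm_steps: "comm_step\<^sup>*\<^sup>* a b \<Longrightarrow> a \<in> reduced_words n w \<Longrightarrow> supp n w b = supp n w a"
  unfolding supp_def using Gamma_comm_steps by fastforce

lemma C_adj_braid_up:
  assumes "braid_up b c" "b \<in> reduced_words n w"
  obtains \<tau>\<^sub>0 where "\<tau>\<^sub>0 \<notin> supp n w b" "supp n w c = insert \<tau>\<^sub>0 (supp n w b)"
    "C_adj n w (comm_class b) (comm_class c)"
proof -
  obtain xs i ys where e: "b = xs @ [i, i + 1, i] @ ys" "c = xs @ [i + 1, i, i + 1] @ ys"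
    using assms(1) unfolding braid_up_def by blast
  have c: "c \<in> reduced_words n w"
    using assms(2) e braid_reduced_words_iff by simp
  obtain \<tau>\<^sub>0 where t0: "\<tau>\<^sub>0 \<in> triples w" "Gamma n b \<tau>\<^sub>0 = 0" "Gamma n c \<tau>\<^sub>0 = 1"
    and rest: "\<And>\<tau>. \<tau> \<in> triples w \<Longrightarrow> \<tau> \<noteq> \<tau>\<^sub>0 \<Longrightarrow> Gamma n b \<tau> = Gamma n c \<tau>"
    using Gamma_braid[of xs i ys n w] assms(2) e by metis
  have "\<tau> \<in> supp n w c \<longleftrightarrow> \<tau> = \<tau>\<^sub>0 \<or> \<tau> \<in> supp n w b" for \<tau>
    unfolding supp_def using t0 rest[of \<tau>] by (cases "\<tau> = \<tau>\<^sub>0") auto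
  then have "\<tau>\<^sub>0 \<notin> supp n w b" "supp n w c = insert \<tau>\<^sub>0 (supp n w b)"
    using t0(2) unfolding supp_def by auto
  moreover have "comm_class b \<noteq> comm_class c"
    using Gamma_comm_steps[of b c n w \<tau>\<^sub>0] assms(2) t0 comm_class_eq_iff by auto
  then have "C_adj n w (comm_class b) (comm_class c)"
    unfolding C_adj_def C_vertices_def comm_class_def
    using assms(2) c braid_step.intros(1)[of xs i ys] e by blast
  ultimately show ?thesis
    using that by blast
qed

text \<open>Along a sequence of commutations and upward braid moves, \<open>sup\<close> grows by one triple
  at each braid move, so the sequence is a path in \<open>C(w)\<close> of that length.\<close>

lemma C_adj_path_up_moves:
  assumes "up_moves a b" "a \<in> reduced_words n w"
  shows "supp n w a \<subseteq> supp n w b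
    \<and> (C_adj n w ^^ card (supp n w b - supp n w a)) (comm_class a) (comm_class b)"
  using assms
proof (induction rule: rtranclp_induct)
  case base
  then show ?case
    by (simp add: relpowp_0_I)
next
  case (step b c)
  have b: "b \<in> reduced_words n w"
    using up_moves_reduced_words_iff[OF step(1)] step.prems by simp
  have IH: "supp n w a \<subseteq> supp n w b"
    "(C_adj n w ^^ card (supp n w b - supp n w a)) (comm_class a) (comm_class b)"
    using step.IH step.prems by auto
  show ?case
  proof (cases "comm_step b c")
    case True
    then have "comm_step\<^sup>*\<^sup>* b c"
      by (rule r_into_rtranclp)
    then have "comm_class b = comm_class c" "supp n w c = supp n w b"
      using comm_class_eq_iff[of b c] supp_comm_steps[OF _ b] by blast+
    then show ?thesis
      using IH by simp
  next
    case False
    then have "braid_up b c"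
      using step(2) by blast
    then obtain \<tau>\<^sub>0 where \<tau>\<^sub>0: "\<tau>\<^sub>0 \<notin> supp n w b" "supp n w c = insert \<tau>\<^sub>0 (supp n w b)"
      and adj: "C_adj n w (comm_class b) (comm_class c)"
      by (rule C_adj_braid_up[OF _ b])
    have "supp n w c - supp n w a = insert \<tau>\<^sub>0 (supp n w b - supp n w a)"
      using \<tau>\<^sub>0 IH(1) by blast
    then have "card (supp n w c - supp n w a) = Suc (card (supp n w b - supp n w a))"
      using \<tau>\<^sub>0(1) by simp
    moreover have "supp n w a \<subseteq> supp n w c"
      using \<tau>\<^sub>0(2) IH(1) by blast
    ultimately show ?thesis
      using relpowp_Suc_I[OF IH(2) adj] by simp
  qed
qed

lemma C_dist_up_moves:
  assumes "up_moves a b" "a \<in> reduced_words n w"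
  shows "C_dist n w (comm_class a) (comm_class b) = t_dist n w a b"
  unfolding C_dist_def
proof (rule Least_equality)
  show "(C_adj n w ^^ t_dist n w a b) (comm_class a) (comm_class b)"
    using C_adj_path_up_moves[OF assms] t_dist_eq_card_Diff by simp
next
  fix k
  assume "(C_adj n w ^^ k) (comm_class a) (comm_class b)"
  moreover have "b \<in> reduced_words n w"
    using up_moves_reduced_words_iff[OF assms(1)] assms(2) by simp
  ultimately show "t_dist n w a b \<le> k"
    using t_dist_le_if_C_adj_path assms(2) by blast
qed

lemma supp_subset_triples: "supp n w a \<subseteq> triples w"
  unfolding supp_def by blast

theorem mainTheorem7:
  fixes n :: nat and w a :: "nat list"
  assumes "is_perm n w" and "a \<in> reduced_words n w"
  shows "C_dist n w (comm_class (a_min w)) (comm_class a) = t_dist n w (a_min w) a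
       \<and> t_dist n w (a_min w) a = card (supp n w a)
       \<and> C_dist n w (comm_class a) (comm_class (a_max w)) = t_dist n w a (a_max w)
       \<and> t_dist n w a (a_max w) = card (triples w) - card (supp n w a)
       \<and> C_dist n w (comm_class (a_min w)) (comm_class (a_max w)) = card (triples w)"
proof -
  have min: "a_min w \<in> reduced_words n w" and max: "a_max w \<in> reduced_words n w"
    using a_min_reduced a_max_reduced assms(1) by blast+
  have supp_min: "supp n w (a_min w) = {}"
    using Gamma_a_min[OF assms(1)] by (simp add: supp_def)
  have supp_max: "supp n w (a_max w) = triples w"
    using Gamma_a_max[OF assms(1)] by (auto simp: supp_def)
  have "C_dist n w (comm_class (a_min w)) (comm_class b) = t_dist n w (a_min w) b"
    and "t_dist n w (a_min w) b = card (supp n w b)" if "b \<in> reduced_words n w" for b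
    using C_dist_up_moves[OF up_moves_a_min[OF that] min] t_dist_eq_card_Diff supp_min by simp_all
  moreover have "C_dist n w (comm_class a) (comm_class (a_max w)) = t_dist n w a (a_max w)"
    using C_dist_up_moves[OF up_moves_a_max[OF assms(2)] assms(2)] .
  moreover have "t_dist n w a (a_max w) = card (triples w) - card (supp n w a)"
    using t_dist_eq_card_Diff[of n w a "a_max w"] supp_max supp_subset_triples
    by (simp add: card_Diff_subset)
  ultimately show ?thesis
    using assms(2) max supp_max by simp
qed

end
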